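(* In the compound model below with arbitrary deterministic parameters (all $\lambda_i>0$), for every $n$ and every $\alpha\in[0,1]$, $$\frac1n\sum_{i\in\mathcal H_0}\mathbb P_{\boldsymbol\lambda}\big(\mathrm P^{VR}(T^{BF}_i,\hat\lambda_i;G(\boldsymbol\lambda))\le\alpha\big)\le\alpha,$$ where $G(\boldsymbol\lambda)=\frac1n\sum_{j=1}^n\delta_{\lambda_j}$ is the empirical distribution of $\lambda_1,\dots,\lambda_n$.
   Context: Fix integers $K_A,K_B\ge 2$, $\nu_A=K_A-1$, $\nu_B=K_B-1$. Compound model: the parameters $\mu_{iA},\mu_{iB}\in\mathbb R$, $\sigma^2_{iA},\sigma^2_{iB}>0$ ($i\le n$) are deterministic, $\lambda_i=\sigma^2_{iA}/\sigma^2_{iB}$, and the statistics $\hat\mu_{iA}\sim N(\mu_{iA},\sigma^2_{iA}/K_A)$, $\hat\sigma^2_{iA}\sim(\sigma^2_{iA}/\nu_A)\chi^2_{\nu_A}$, $\hat\mu_{iB}\sim N(\mu_{iB},\sigma^2_{iB}/K_B)$, $\hat\sigma^2_{iB}\sim(\sigma^2_{iB}/\nu_B)\chi^2_{\nu_B}$ are all independent; $\mathbb P_{\boldsymbol\lambda}$ is probability under this law. $\mathcal H_0=\{i\le n:\mu_{iA}=\mu_{iB}\}$. $\hat\lambda_i=\hat\sigma^2_{iA}/\hat\sigma^2_{iB}$, $T^{BF}_i=(\hat\mu_{iA}-\hat\mu_{iB})/\sqrt{\hat\sigma^2_{iA}/K_A+\hat\sigma^2_{iB}/K_B}$. $p(l\mid\lambda)=\frac{1}{\lambda}\frac{1}{B(\nu_A/2,\nu_B/2)}(\nu_A/\nu_B)^{\nu_A/2}(l/\lambda)^{\nu_A/2-1}(1+\nu_A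 l/(\nu_B\lambda))^{-(\nu_A+\nu_B)/2}$. $\mathrm P^{VR}(t,l;\lambda)=2F_{t,\nu_A+\nu_B}(-|t|/\phi(\lambda,l))$ with $F_{t,\nu}$ the Student-$t$ CDF, $\phi(\lambda,l)=\sqrt{(\nu_A c/\gamma+\nu_B(1-c)/(1-\gamma))/(\nu_A+\nu_B)}$, $c=l/(l+K_A/K_B)$, $\gamma=\lambda/(\lambda+K_A/K_B)$. Then $\mathrm P^{VR}(t,l;G(\boldsymbol\lambda))=\sum_{j=1}^n\mathrm P^{VR}(t,l;\lambda_j)p(l\mid\lambda_j)/\sum_{j=1}^n p(l\mid\lambda_j)$. *)

theory Defs
  imports "HOL-Probability.Probability"
begin

definition chi2_density :: "nat \<Rightarrow> real \<Rightarrow> real" where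
  "chi2_density k x = (if x > 0 then x powr (real k / 2 - 1) * exp (- x / 2)
       / (2 powr (real k / 2) * Gamma (real k / 2)) else 0)"

text \<open>Law of (s / nu) * chi2_nu, i.e. of a sample variance with true variance s.\<close>
definition scaled_chi2 :: "nat \<Rightarrow> real \<Rightarrow> real measure" where
  "scaled_chi2 nu s = distr (density lborel (chi2_density nu)) lborel (\<lambda>x. s / real nu * x)"

definition normal_law :: "real \<Rightarrow> real \<Rightarrow> real measure" where
  "normal_law m v = density lborel (normal_density m (sqrt v))"

definition student_t_density :: "nat \<Rightarrow> real \<Rightarrow> real" where
  "student_t_density nu x = Gamma ((real nu + 1) / 2) / (sqrt (real nu * pi) * Gamma (real nu / 2))
      * (1 + x\<^sup>2 / real nu) powr (- (real nu + 1) / 2)"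

definition student_t_cdf :: "nat \<Rightarrow> real \<Rightarrow> real" where
  "student_t_cdf nu t = (LINT x:{..t}|lborel. student_t_density nu x)"

text \<open>Joint law of (muhat_A, sigmahat2_A, muhat_B, sigmahat2_B) for one unit.\<close>
definition unit_law :: "nat \<Rightarrow> nat \<Rightarrow> real \<Rightarrow> real \<Rightarrow> real \<Rightarrow> real \<Rightarrow>
    (real \<times> real \<times> real \<times> real) measure" where
  "unit_law KA KB muA sA muB sB =
     normal_law muA (sA / real KA) \<Otimes>\<^sub>M
     (scaled_chi2 (KA - 1) sA \<Otimes>\<^sub>M
     (normal_law muB (sB / real KB) \<Otimes>\<^sub>M scaled_chi2 (KB - 1) sB))"

definition T_BF :: "nat \<Rightarrow> nat \<Rightarrow> real \<times> real \<times> real \<times> real \<Rightarrow> real" where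
  "T_BF KA KB w = (case w of (mA, sA, mB, sB) \<Rightarrow>
      (mA - mB) / sqrt (sA / real KA + sB / real KB))"

definition lam_hat :: "real \<times> real \<times> real \<times> real \<Rightarrow> real" where
  "lam_hat w = (case w of (mA, sA, mB, sB) \<Rightarrow> sA / sB)"

definition p_ratio :: "nat \<Rightarrow> nat \<Rightarrow> real \<Rightarrow> real \<Rightarrow> real" where
  "p_ratio KA KB l lam = (let nA = real (KA - 1); nB = real (KB - 1) in
     if l > 0 then
       1 / lam * (1 / Beta (nA / 2) (nB / 2)) * (nA / nB) powr (nA / 2)
       * (l / lam) powr (nA / 2 - 1) * (1 + nA * l / (nB * lam)) powr (- (nA + nB) / 2)
     else 0)"

definition phi_VR :: "nat \<Rightarrow> nat \<Rightarrow> real \<Rightarrow> real \<Rightarrow> real" where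
  "phi_VR KA KB lam l = (let nA = real (KA - 1); nB = real (KB - 1);
      c = l / (l + real KA / real KB); g = lam / (lam + real KA / real KB) in
      sqrt ((nA * c / g + nB * (1 - c) / (1 - g)) / (nA + nB)))"

definition P_VR :: "nat \<Rightarrow> nat \<Rightarrow> real \<Rightarrow> real \<Rightarrow> real \<Rightarrow> real" where
  "P_VR KA KB t l lam = 2 * student_t_cdf (KA - 1 + (KB - 1)) (- \<bar>t\<bar> / phi_VR KA KB lam l)"

text \<open>P^VR(t, l; G) with G the empirical distribution of lam 1, ..., lam n.\<close>
definition P_VR_G :: "nat \<Rightarrow> nat \<Rightarrow> nat \<Rightarrow> (nat \<Rightarrow> real) \<Rightarrow> real \<Rightarrow> real \<Rightarrow> real" where
  "P_VR_G KA KB n lam t l =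
     (\<Sum>j=1..n. P_VR KA KB t l (lam j) * p_ratio KA KB l (lam j)) / (\<Sum>j=1..n. p_ratio KA KB l (lam j))"

end

theory Submission
  imports Defs
begin

text \<open>Under the null hypothesis \<open>\<mu>\<^sub>i\<^sub>A = \<mu>\<^sub>i\<^sub>B\<close> the variance ratio \<open>\<lambda>\<^sub>h\<^sub>a\<^sub>t\<^sub>i\<close> has density
  \<open>p(\<cdot> | \<lambda>\<^sub>i)\<close>, and conditionally on \<open>\<lambda>\<^sub>h\<^sub>a\<^sub>t\<^sub>i = l\<close> the Welch statistic divided by
  \<open>\<phi>(\<lambda>\<^sub>i, l)\<close> is Student-\<open>t\<close> with \<open>\<nu>\<^sub>A + \<nu>\<^sub>B\<close> degrees of freedom. Giving every unit
  \<open>i \<le> n\<close> equal means only adds terms, and the resulting sum of rejection probabilities is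
  \<open>\<integral> \<Sum>\<^sub>i p(l | \<lambda>\<^sub>i) P(G\<^sub>l(\<bar>\<phi>(\<lambda>\<^sub>i, l) X\<bar>) \<le> \<alpha>) dl\<close> with \<open>X \<sim> t\<close>
  and \<open>G\<^sub>l\<close> the mixture p-value. For fixed \<open>l\<close>, \<open>G\<^sub>l\<close> is continuous and decreasing
  in \<open>\<bar>t\<bar>\<close>, so its rejection region is \<open>{\<bar>t\<bar> \<ge> c}\<close>, and
  \<open>\<Sum>\<^sub>i p(l | \<lambda>\<^sub>i) P(\<phi>(\<lambda>\<^sub>i, l) \<bar>X\<bar> \<ge> c) = (\<Sum>\<^sub>i p(l | \<lambda>\<^sub>i)) G\<^sub>l(c) \<le> \<alpha> \<Sum>\<^sub>i p(l | \<lambda>\<^sub>i)\<close>.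
  Integrating over \<open>l\<close> gives at most \<open>\<alpha> n\<close>.\<close>

section \<open>Chi-square and normal laws\<close>

lemma nn_integral_powr_exp_Gamma:
  fixes k c :: real
  assumes "k > 0" "c > 0"
  shows "(\<integral>\<^sup>+t. ennreal (indicator {0<..} t * t powr (k - 1) * exp (- c * t)) \<partial>lborel)
    = ennreal (Gamma k / c powr k)"
proof -
  let ?I = "\<integral>\<^sup>+t. ennreal (indicator {0<..} t * t powr (k - 1) * exp (- c * t)) \<partial>lborel"
  have "ennreal (Gamma k) = (\<integral>\<^sup>+u. ennreal (indicator {0..} u * u powr (k - 1) / exp u) \<partial>lborel)"
    using Gamma_conv_nn_integral_real[OF assms(1)] by simp
  also have "\<dots> = ennreal c * (\<integral>\<^sup>+x. ennreal (indicator {0..} (0 + c * x) * (0 + c * x) powr (k - 1)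
      / exp (0 + c * x)) \<partial>lborel)"
    using assms by (subst nn_integral_real_affine[where c=c and t=0]) auto
  also have "(\<lambda>x. ennreal (indicator {0..} (0 + c * x) * (0 + c * x) powr (k - 1) / exp (0 + c * x)))
     = (\<lambda>x. ennreal (c powr (k - 1)) * ennreal (indicator {0<..} x * x powr (k - 1) * exp (- c * x)))"
  proof
    fix x
    show "ennreal (indicator {0..} (0 + c * x) * (0 + c * x) powr (k - 1) / exp (0 + c * x))
      = ennreal (c powr (k - 1)) * ennreal (indicator {0<..} x * x powr (k - 1) * exp (- c * x))"
      using assms by (cases "x > 0")
        (auto simp: ennreal_mult'[symmetric] powr_mult exp_minus field_simps indicator_def
          zero_le_mult_iff)
  qed
  finally have "ennreal (Gamma k) = ennreal (c * c powr (k - 1)) * ?I"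
    using assms by (simp add: nn_integral_cmult ennreal_mult' mult.assoc)
  also have "c * c powr (k - 1) = c powr k"
    using assms by (simp add: powr_mult_base)
  finally have Gamma_eq: "ennreal (Gamma k) = ennreal (c powr k) * ?I" .
  have "c powr k > 0"
    using assms by simp
  then have "ennreal (Gamma k / c powr k) = ennreal (Gamma k) / ennreal (c powr k)"
    using assms by (simp add: divide_ennreal Gamma_real_pos less_imp_le)
  also have "\<dots> = ennreal (c powr k) * ?I / ennreal (c powr k)"
    unfolding Gamma_eq ..
  also have "\<dots> = ?I"
    using \<open>c powr k > 0\<close> by (subst mult.commute) (rule ennreal_mult_divide_eq, auto)
  finally show ?thesis ..
qed

lemma chi2_density_nonneg: "chi2_density k x \<ge> 0"
proof -
  have "Gamma (real k / 2) \<ge> 0"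
    by (cases "k = 0") (auto intro: less_imp_le Gamma_real_pos)
  then show ?thesis
    unfolding chi2_density_def by (auto intro!: divide_nonneg_nonneg)
qed

lemma chi2_density_nonpos: "x \<le> 0 \<Longrightarrow> chi2_density k x = 0"
  by (simp add: chi2_density_def)

lemma borel_measurable_chi2_density [measurable]: "chi2_density k \<in> borel_measurable borel"
  unfolding chi2_density_def[abs_def] by measurable

lemma nn_integral_chi2_density:
  assumes "k > 0"
  shows "(\<integral>\<^sup>+x. ennreal (chi2_density k x) \<partial>lborel) = 1"
proof -
  define C where "C = 1 / (2 powr (real k / 2) * Gamma (real k / 2))"
  have \<Gamma>: "Gamma (real k / 2) > 0"
    using assms by (simp add: Gamma_real_pos)
  then have C: "C > 0"
    by (simp add: C_def)
  have "(\<integral>\<^sup>+x. ennreal (chi2_density k x) \<partial>lborel) = (\<integral>\<^sup>+x. ennreal C *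
      ennreal (indicator {0<..} x * x powr (real k / 2 - 1) * exp (- (1 / 2) * x)) \<partial>lborel)"
    using C by (intro nn_integral_cong)
      (auto simp: chi2_density_def C_def indicator_def ennreal_mult'[symmetric] field_simps)
  also have "\<dots> = ennreal C * ennreal (Gamma (real k / 2) / (1 / 2) powr (real k / 2))"
    using assms nn_integral_powr_exp_Gamma[of "real k / 2" "1 / 2"] by (subst nn_integral_cmult) auto
  also have "\<dots> = 1"
    using C \<Gamma> by (simp add: C_def ennreal_mult'[symmetric] powr_divide)
  finally show ?thesis .
qed

lemma prob_space_chi2_density: "k > 0 \<Longrightarrow> prob_space (density lborel (chi2_density k))"
  by standard (simp add: emeasure_density nn_integral_chi2_density)

lemma sets_scaled_chi2 [measurable_cong, simp]: "sets (scaled_chi2 k s) = sets borel"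
  unfolding scaled_chi2_def by simp

lemma prob_space_scaled_chi2: "k > 0 \<Longrightarrow> prob_space (scaled_chi2 k s)"
  unfolding scaled_chi2_def by (rule prob_space.prob_space_distr[OF prob_space_chi2_density]) auto

lemma nn_integral_scaled_chi2:
  assumes [measurable]: "f \<in> borel_measurable borel"
  shows "(\<integral>\<^sup>+x. f x \<partial>scaled_chi2 k s) = (\<integral>\<^sup>+x. ennreal (chi2_density k x) * f (s / real k * x) \<partial>lborel)"
  unfolding scaled_chi2_def by (simp add: nn_integral_distr nn_integral_density)

lemma sets_normal_law [measurable_cong, simp]: "sets (normal_law m v) = sets borel"
  unfolding normal_law_def by simp

lemma prob_space_normal_law: "v > 0 \<Longrightarrow> prob_space (normal_law m v)"
  unfolding normal_law_def by (rule prob_space_normal_density) simp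

lemma nn_integral_normal_law:
  assumes [measurable]: "f \<in> borel_measurable borel"
  shows "(\<integral>\<^sup>+x. f x \<partial>normal_law m v) = (\<integral>\<^sup>+x. ennreal (normal_density m (sqrt v) x) * f x \<partial>lborel)"
  unfolding normal_law_def by (simp add: nn_integral_density)

section \<open>Density-weighted integrals on the real line\<close>

lemma nn_integral_lborel_scale:
  fixes f :: "real \<Rightarrow> ennreal"
  assumes "f \<in> borel_measurable borel" "c > 0"
  shows "(\<integral>\<^sup>+x. f x \<partial>lborel) = ennreal c * (\<integral>\<^sup>+x. f (c * x) \<partial>lborel)"
  using nn_integral_real_affine[OF assms(1), of c 0] assms(2) by simp

lemma nn_integral_density_cong:
  fixes a :: "'a \<Rightarrow> real"
  assumes "\<And>x. x \<in> space M \<Longrightarrow> a x > 0 \<Longrightarrow> f x = g x"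
  shows "(\<integral>\<^sup>+x. ennreal (a x) * f x \<partial>M) = (\<integral>\<^sup>+x. ennreal (a x) * g x \<partial>M)"
  using assms by (intro nn_integral_cong) (metis ennreal_neg mult_zero_left not_less)

lemma nn_integral_density_swap:
  fixes a b :: "real \<Rightarrow> real" and h :: "real \<Rightarrow> real \<Rightarrow> ennreal"
  assumes [measurable]: "a \<in> borel_measurable borel" "b \<in> borel_measurable borel"
    and [measurable]: "case_prod h \<in> borel_measurable (borel \<Otimes>\<^sub>M borel)"
  shows "(\<integral>\<^sup>+x. ennreal (a x) * (\<integral>\<^sup>+y. ennreal (b y) * h x y \<partial>lborel) \<partial>lborel)
       = (\<integral>\<^sup>+y. ennreal (b y) * (\<integral>\<^sup>+x. ennreal (a x) * h x y \<partial>lborel) \<partial>lborel)"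
proof -
  have "(\<integral>\<^sup>+x. ennreal (a x) * (\<integral>\<^sup>+y. ennreal (b y) * h x y \<partial>lborel) \<partial>lborel)
      = (\<integral>\<^sup>+x. \<integral>\<^sup>+y. ennreal (a x) * (ennreal (b y) * h x y) \<partial>lborel \<partial>lborel)"
    by (rule nn_integral_cong) (simp add: nn_integral_cmult)
  also have "\<dots> = (\<integral>\<^sup>+y. \<integral>\<^sup>+x. ennreal (a x) * (ennreal (b y) * h x y) \<partial>lborel \<partial>lborel)"
    by (subst lborel_pair.Fubini') (auto simp: case_prod_unfold cong: measurable_cong_sets)
  also have "\<dots> = (\<integral>\<^sup>+y. ennreal (b y) * (\<integral>\<^sup>+x. ennreal (a x) * h x y \<partial>lborel) \<partial>lborel)"
    by (rule nn_integral_cong) (simp add: nn_integral_cmult[symmetric] mult.left_commute)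
  finally show ?thesis .
qed

lemma nn_integral_density_reorder4:
  fixes a1 a2 a3 a4 :: "real \<Rightarrow> real" and g :: "real \<Rightarrow> real \<Rightarrow> real \<Rightarrow> real \<Rightarrow> ennreal"
  assumes [measurable]: "a1 \<in> borel_measurable borel" "a2 \<in> borel_measurable borel"
    "a3 \<in> borel_measurable borel" "a4 \<in> borel_measurable borel"
    and [measurable]: "(\<lambda>(x1, x2, x3, x4). g x1 x2 x3 x4)
      \<in> borel_measurable (borel \<Otimes>\<^sub>M (borel \<Otimes>\<^sub>M (borel \<Otimes>\<^sub>M borel)))"
  shows "(\<integral>\<^sup>+x1. ennreal (a1 x1) * (\<integral>\<^sup>+x2. ennreal (a2 x2) * (\<integral>\<^sup>+x3. ennreal (a3 x3) *
      (\<integral>\<^sup>+x4. ennreal (a4 x4) * g x1 x2 x3 x4 \<partial>lborel) \<partial>lborel) \<partial>lborel) \<partial>lborel)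
    = (\<integral>\<^sup>+x2. ennreal (a2 x2) * (\<integral>\<^sup>+x4. ennreal (a4 x4) * (\<integral>\<^sup>+x1. ennreal (a1 x1) *
      (\<integral>\<^sup>+x3. ennreal (a3 x3) * g x1 x2 x3 x4 \<partial>lborel) \<partial>lborel) \<partial>lborel) \<partial>lborel)"
proof -
  have [measurable]: "(\<lambda>x. g (f1 x) (f2 x) (f3 x) (f4 x)) \<in> borel_measurable M"
    if [measurable]: "f1 \<in> borel_measurable M" "f2 \<in> borel_measurable M"
      "f3 \<in> borel_measurable M" "f4 \<in> borel_measurable M" for M f1 f2 f3 f4
  proof -
    have "(\<lambda>x. (f1 x, f2 x, f3 x, f4 x)) \<in> measurable M (borel \<Otimes>\<^sub>M (borel \<Otimes>\<^sub>M (borel \<Otimes>\<^sub>M borel)))"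
      by measurable
    from measurable_compose[OF this assms(5)] show ?thesis
      by simp
  qed
  have "(\<integral>\<^sup>+x1. ennreal (a1 x1) * (\<integral>\<^sup>+x2. ennreal (a2 x2) * (\<integral>\<^sup>+x3. ennreal (a3 x3) *
      (\<integral>\<^sup>+x4. ennreal (a4 x4) * g x1 x2 x3 x4 \<partial>lborel) \<partial>lborel) \<partial>lborel) \<partial>lborel)
    = (\<integral>\<^sup>+x1. ennreal (a1 x1) * (\<integral>\<^sup>+x2. ennreal (a2 x2) * (\<integral>\<^sup>+x4. ennreal (a4 x4) *
      (\<integral>\<^sup>+x3. ennreal (a3 x3) * g x1 x2 x3 x4 \<partial>lborel) \<partial>lborel) \<partial>lborel) \<partial>lborel)"
    by (intro nn_integral_cong arg_cong[where f="(*) _"] nn_integral_density_swap) measurable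
  also have "\<dots> = (\<integral>\<^sup>+x2. ennreal (a2 x2) * (\<integral>\<^sup>+x1. ennreal (a1 x1) * (\<integral>\<^sup>+x4. ennreal (a4 x4) *
      (\<integral>\<^sup>+x3. ennreal (a3 x3) * g x1 x2 x3 x4 \<partial>lborel) \<partial>lborel) \<partial>lborel) \<partial>lborel)"
    by (rule nn_integral_density_swap) measurable
  also have "\<dots> = (\<integral>\<^sup>+x2. ennreal (a2 x2) * (\<integral>\<^sup>+x4. ennreal (a4 x4) * (\<integral>\<^sup>+x1. ennreal (a1 x1) *
      (\<integral>\<^sup>+x3. ennreal (a3 x3) * g x1 x2 x3 x4 \<partial>lborel) \<partial>lborel) \<partial>lborel) \<partial>lborel)"
    by (intro nn_integral_cong arg_cong[where f="(*) _"] nn_integral_density_swap) measurable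
  finally show ?thesis .
qed

lemma borel_measurable_case_prod_comp:
  fixes F :: "real \<Rightarrow> real \<Rightarrow> 'b::topological_space"
  assumes F: "case_prod F \<in> borel_measurable (borel \<Otimes>\<^sub>M borel)"
    and [measurable]: "f \<in> borel_measurable M" "g \<in> borel_measurable M"
  shows "(\<lambda>x. F (f x) (g x)) \<in> borel_measurable M"
proof -
  have "(\<lambda>x. (f x, g x)) \<in> measurable M (borel \<Otimes>\<^sub>M borel)"
    by measurable
  from measurable_compose[OF this F] show ?thesis
    by simp
qed

section \<open>Normal differences and the Student \<open>t\<close> law\<close>

lemma nn_integral_normal_density_scale:
  fixes g :: "real \<Rightarrow> ennreal"
  assumes [measurable]: "g \<in> borel_measurable borel" and \<sigma>: "\<sigma> > 0"
  shows "(\<integral>\<^sup>+x. ennreal (normal_density 0 \<sigma> x) * g x \<partial>lborel)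
    = (\<integral>\<^sup>+z. ennreal (std_normal_density z) * g (\<sigma> * z) \<partial>lborel)"
proof -
  have "(\<integral>\<^sup>+x. ennreal (normal_density 0 \<sigma> x) * g x \<partial>lborel)
      = (\<integral>\<^sup>+z. ennreal \<sigma> * (ennreal (normal_density 0 \<sigma> (\<sigma> * z)) * g (\<sigma> * z)) \<partial>lborel)"
    using \<sigma> by (subst nn_integral_lborel_scale[of _ \<sigma>]) (auto simp: nn_integral_cmult)
  also have "\<dots> = (\<integral>\<^sup>+z. ennreal (std_normal_density z) * g (\<sigma> * z) \<partial>lborel)"
  proof (rule nn_integral_cong)
    fix z :: real
    have "\<sigma> * normal_density 0 \<sigma> (\<sigma> * z) = std_normal_density z"
      using \<sigma> unfolding normal_density_def by (simp add: power_mult_distrib real_sqrt_mult field_simps)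
    then show "ennreal \<sigma> * (ennreal (normal_density 0 \<sigma> (\<sigma> * z)) * g (\<sigma> * z))
      = ennreal (std_normal_density z) * g (\<sigma> * z)"
      using \<sigma> by (simp add: mult.assoc[symmetric] ennreal_mult'[symmetric] normal_density_nonneg)
  qed
  finally show ?thesis .
qed

lemma nn_integral_normal_density_diff:
  fixes g :: "real \<Rightarrow> ennreal"
  assumes [measurable]: "g \<in> borel_measurable borel" and a: "a > 0" and b: "b > 0"
  shows "(\<integral>\<^sup>+x. ennreal (normal_density m a x) *
      (\<integral>\<^sup>+y. ennreal (normal_density m b y) * g (x - y) \<partial>lborel) \<partial>lborel)
    = (\<integral>\<^sup>+d. ennreal (normal_density 0 (sqrt (a\<^sup>2 + b\<^sup>2)) d) * g d \<partial>lborel)"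
proof -
  have "(\<integral>\<^sup>+x. ennreal (normal_density m a x) *
      (\<integral>\<^sup>+y. ennreal (normal_density m b y) * g (x - y) \<partial>lborel) \<partial>lborel)
    = (\<integral>\<^sup>+y. ennreal (normal_density m b y) *
      (\<integral>\<^sup>+x. ennreal (normal_density m a x) * g (x - y) \<partial>lborel) \<partial>lborel)"
    by (rule nn_integral_density_swap) measurable
  also have "\<dots> = (\<integral>\<^sup>+y. ennreal (normal_density m b y) *
      (\<integral>\<^sup>+d. ennreal (normal_density m a (y + d)) * g d \<partial>lborel) \<partial>lborel)"
    using nn_integral_real_affine[of "\<lambda>x. ennreal (normal_density m a x) * g (x - y)" 1 y for y]
    by (intro nn_integral_cong) simp
  also have "\<dots> = (\<integral>\<^sup>+y. \<integral>\<^sup>+d. ennreal (normal_density m a (y + d)) * ennreal (normal_density m b y)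
      * g d \<partial>lborel \<partial>lborel)"
    by (intro nn_integral_cong) (simp add: nn_integral_cmult[symmetric] mult_ac)
  also have "\<dots> = (\<integral>\<^sup>+d. \<integral>\<^sup>+y. ennreal (normal_density m a (y + d)) * ennreal (normal_density m b y)
      * g d \<partial>lborel \<partial>lborel)"
    by (subst lborel_pair.Fubini') (auto simp: case_prod_unfold cong: measurable_cong_sets)
  also have "\<dots> = (\<integral>\<^sup>+d. (\<integral>\<^sup>+y. ennreal (normal_density m a (y + d) * normal_density m b y) \<partial>lborel)
      * g d \<partial>lborel)"
    by (intro nn_integral_cong)
      (simp add: nn_integral_multc[symmetric] ennreal_mult' normal_density_nonneg)
  also have "\<dots> = (\<integral>\<^sup>+d. ennreal (normal_density 0 (sqrt (a\<^sup>2 + b\<^sup>2)) d) * g d \<partial>lborel)"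
  proof (rule nn_integral_cong)
    fix d :: real
    have "(\<integral>\<^sup>+y. ennreal (normal_density m a (y + d) * normal_density m b y) \<partial>lborel)
        = (\<integral>\<^sup>+u. ennreal (normal_density m a ((m + (-1) * u) + d)
            * normal_density m b (m + (-1) * u)) \<partial>lborel)"
      by (subst nn_integral_real_affine[where c="-1" and t=m]) auto
    also have "\<dots> = (\<integral>\<^sup>+u. ennreal (normal_density 0 a (d - u) * normal_density 0 b u) \<partial>lborel)"
      by (rule nn_integral_cong) (simp add: normal_density_def algebra_simps power2_commute)
    also have "\<dots> = normal_density 0 (sqrt (a\<^sup>2 + b\<^sup>2)) d"
      using conv_normal_density_zero_mean[OF a b] by metis
    finally show "(\<integral>\<^sup>+y. ennreal (normal_density m a (y + d) * normal_density m b y) \<partial>lborel) * g d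
      = ennreal (normal_density 0 (sqrt (a\<^sup>2 + b\<^sup>2)) d) * g d"
      by simp
  qed
  finally show ?thesis .
qed

lemma nn_integral_normal_density_diff_std:
  fixes h :: "real \<Rightarrow> ennreal"
  assumes [measurable]: "h \<in> borel_measurable borel" and a: "a > 0" and b: "b > 0"
  shows "(\<integral>\<^sup>+x. ennreal (normal_density m (sqrt a) x) *
      (\<integral>\<^sup>+y. ennreal (normal_density m (sqrt b) y) * h (x - y) \<partial>lborel) \<partial>lborel)
    = (\<integral>\<^sup>+z. ennreal (std_normal_density z) * h (sqrt (a + b) * z) \<partial>lborel)"
proof -
  have "(\<integral>\<^sup>+x. ennreal (normal_density m (sqrt a) x) *
      (\<integral>\<^sup>+y. ennreal (normal_density m (sqrt b) y) * h (x - y) \<partial>lborel) \<partial>lborel)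
    = (\<integral>\<^sup>+d. ennreal (normal_density 0 (sqrt ((sqrt a)\<^sup>2 + (sqrt b)\<^sup>2)) d) * h d \<partial>lborel)"
    using a b by (intro nn_integral_normal_density_diff) auto
  also have "(sqrt a)\<^sup>2 + (sqrt b)\<^sup>2 = a + b"
    using a b by simp
  also have "(\<integral>\<^sup>+d. ennreal (normal_density 0 (sqrt (a + b)) d) * h d \<partial>lborel)
    = (\<integral>\<^sup>+z. ennreal (std_normal_density z) * h (sqrt (a + b) * z) \<partial>lborel)"
    using a b by (intro nn_integral_normal_density_scale) auto
  finally show ?thesis .
qed

lemma borel_measurable_student_t_density [measurable]:
  "student_t_density k \<in> borel_measurable borel"
  unfolding student_t_density_def[abs_def] by measurable

lemma chi2_normal_mixture_integrand:
  fixes x W :: real and k :: nat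
  assumes k: "k > 0"
  defines "C \<equiv> 1 / (2 powr (real k / 2) * Gamma (real k / 2)) / sqrt (real k) / sqrt (2 * pi)"
  defines "c \<equiv> (1 + x\<^sup>2 / real k) / 2"
  shows "chi2_density k W * sqrt (W / real k) * std_normal_density (sqrt (W / real k) * x)
     = C * (indicator {0<..} W * W powr ((real k + 1) / 2 - 1) * exp (- c * W))"
proof (cases "W > 0")
  case False
  then show ?thesis
    by (simp add: chi2_density_nonpos)
next
  case True
  have powr_eq: "W powr (real k / 2 - 1) * sqrt W = W powr ((real k + 1) / 2 - 1)"
    using True by (simp add: powr_half_sqrt[symmetric] powr_add[symmetric] field_simps)
  have "- W / 2 + - (sqrt (W / real k) * x)\<^sup>2 / 2 = - c * W"
    using True k by (simp add: c_def power_mult_distrib field_simps)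
  then have exp_eq: "exp (- W / 2) * exp (- (sqrt (W / real k) * x)\<^sup>2 / 2) = exp (- c * W)"
    by (simp add: exp_add[symmetric])
  have "chi2_density k W * sqrt (W / real k) * std_normal_density (sqrt (W / real k) * x)
     = (W powr (real k / 2 - 1) * sqrt W) * (exp (- W / 2) * exp (- (sqrt (W / real k) * x)\<^sup>2 / 2))
       * (1 / (2 powr (real k / 2) * Gamma (real k / 2)) / sqrt (real k) / sqrt (2 * pi))"
    using True by (simp add: chi2_density_def std_normal_density_def real_sqrt_divide field_simps)
  also have "\<dots> = C * (indicator {0<..} W * W powr ((real k + 1) / 2 - 1) * exp (- c * W))"
    unfolding powr_eq exp_eq C_def using True by simp
  finally show ?thesis .
qed

lemma student_t_density_eq_Gamma:
  fixes x :: real and k :: nat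
  assumes k: "k > 0"
  shows "1 / (2 powr (real k / 2) * Gamma (real k / 2)) / sqrt (real k) / sqrt (2 * pi)
     * (Gamma ((real k + 1) / 2) / ((1 + x\<^sup>2 / real k) / 2) powr ((real k + 1) / 2))
     = student_t_density k x"
proof -
  define q where "q = 1 + x\<^sup>2 / real k"
  have q: "q > 0"
    using k by (simp add: q_def add_pos_nonneg)
  have "Gamma (real k / 2) > 0"
    using k by (simp add: Gamma_real_pos)
  moreover have half_powr: "(q / 2) powr ((real k + 1) / 2)
      = q powr ((real k + 1) / 2) / (2 powr (real k / 2) * sqrt 2)"
    using q by (simp add: powr_divide powr_add[symmetric] powr_half_sqrt[symmetric] add_divide_distrib)
  moreover have minus_powr: "q powr (- (real k + 1) / 2) = 1 / q powr ((real k + 1) / 2)"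
    using q powr_minus_divide[of q "(real k + 1) / 2"] by (simp add: minus_divide_left)
  ultimately show ?thesis
    unfolding student_t_density_def q_def[symmetric] half_powr minus_powr
    using q k by (simp add: field_simps real_sqrt_mult)
qed

lemma nn_integral_chi2_normal_mixture:
  fixes x :: real and k :: nat
  assumes k: "k > 0"
  shows "(\<integral>\<^sup>+W. ennreal (chi2_density k W * sqrt (W / real k)
      * std_normal_density (sqrt (W / real k) * x)) \<partial>lborel) = ennreal (student_t_density k x)"
proof -
  define C where "C = 1 / (2 powr (real k / 2) * Gamma (real k / 2)) / sqrt (real k) / sqrt (2 * pi)"
  define c where "c = (1 + x\<^sup>2 / real k) / 2"
  have C: "C > 0"
    using k by (simp add: C_def Gamma_real_pos)
  have c: "c > 0"
    using k by (simp add: c_def add_pos_nonneg)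
  have "(\<integral>\<^sup>+W. ennreal (chi2_density k W * sqrt (W / real k)
      * std_normal_density (sqrt (W / real k) * x)) \<partial>lborel)
     = (\<integral>\<^sup>+W. ennreal C * ennreal (indicator {0<..} W * W powr ((real k + 1) / 2 - 1)
      * exp (- c * W)) \<partial>lborel)"
    using C by (intro nn_integral_cong)
      (simp add: chi2_normal_mixture_integrand[OF k] C_def c_def ennreal_mult'[symmetric])
  also have "\<dots> = ennreal C * ennreal (Gamma ((real k + 1) / 2) / c powr ((real k + 1) / 2))"
    using c nn_integral_powr_exp_Gamma[of "(real k + 1) / 2" c] by (subst nn_integral_cmult) auto
  also have "\<dots> = ennreal (student_t_density k x)"
    using C by (simp add: ennreal_mult'[symmetric] student_t_density_eq_Gamma[OF k, symmetric]
        C_def c_def)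
  finally show ?thesis .
qed

text \<open>If \<open>W \<sim> \<chi>\<^sup>2\<^sub>k\<close> and \<open>Z \<sim> N(0, 1)\<close> are independent, then \<open>Z / sqrt (W / k)\<close> is Student-\<open>t\<close>
  with \<open>k\<close> degrees of freedom.\<close>

lemma nn_integral_student_t_density_mixture:
  fixes h :: "real \<Rightarrow> ennreal" and k :: nat
  assumes k: "k > 0" and [measurable]: "h \<in> borel_measurable borel"
  shows "(\<integral>\<^sup>+W. ennreal (chi2_density k W) *
      (\<integral>\<^sup>+z. ennreal (std_normal_density z) * h (sqrt (real k / W) * z) \<partial>lborel) \<partial>lborel)
    = (\<integral>\<^sup>+x. ennreal (student_t_density k x) * h x \<partial>lborel)"
proof -
  have "(\<integral>\<^sup>+W. ennreal (chi2_density k W) *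
      (\<integral>\<^sup>+z. ennreal (std_normal_density z) * h (sqrt (real k / W) * z) \<partial>lborel) \<partial>lborel)
    = (\<integral>\<^sup>+W. \<integral>\<^sup>+x. ennreal (chi2_density k W * sqrt (W / real k)
      * std_normal_density (sqrt (W / real k) * x)) * h x \<partial>lborel \<partial>lborel)"
  proof (rule nn_integral_cong)
    fix W :: real
    show "ennreal (chi2_density k W) *
        (\<integral>\<^sup>+z. ennreal (std_normal_density z) * h (sqrt (real k / W) * z) \<partial>lborel)
      = (\<integral>\<^sup>+x. ennreal (chi2_density k W * sqrt (W / real k)
        * std_normal_density (sqrt (W / real k) * x)) * h x \<partial>lborel)"
    proof (cases "W > 0")
      case False
      then show ?thesis
        by (simp add: chi2_density_nonpos)
    next
      case True
      define \<kappa> where "\<kappa> = sqrt (W / real k)"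
      have \<kappa>: "\<kappa> > 0"
        using True k by (simp add: \<kappa>_def)
      have inv: "sqrt (real k / W) * \<kappa> = 1"
        using True k by (simp add: \<kappa>_def real_sqrt_mult[symmetric])
      have "(\<integral>\<^sup>+z. ennreal (std_normal_density z) * h (sqrt (real k / W) * z) \<partial>lborel)
          = ennreal \<kappa> * (\<integral>\<^sup>+x. ennreal (std_normal_density (\<kappa> * x))
            * h (sqrt (real k / W) * (\<kappa> * x)) \<partial>lborel)"
        using \<kappa> by (rule nn_integral_lborel_scale[rotated]) simp
      also have "\<dots> = ennreal \<kappa> * (\<integral>\<^sup>+x. ennreal (std_normal_density (\<kappa> * x)) * h x \<partial>lborel)"
        by (simp add: mult.assoc[symmetric] inv)
      finally show ?thesis
        using \<kappa> chi2_density_nonneg[of k W]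
        by (simp add: \<kappa>_def[symmetric] nn_integral_cmult[symmetric] mult.assoc[symmetric]
            ennreal_mult'[symmetric])
    qed
  qed
  also have "\<dots> = (\<integral>\<^sup>+x. \<integral>\<^sup>+W. ennreal (chi2_density k W * sqrt (W / real k)
      * std_normal_density (sqrt (W / real k) * x)) * h x \<partial>lborel \<partial>lborel)"
    by (subst lborel_pair.Fubini') (auto simp: case_prod_unfold cong: measurable_cong_sets)
  also have "\<dots> = (\<integral>\<^sup>+x. ennreal (student_t_density k x) * h x \<partial>lborel)"
    by (rule nn_integral_cong) (simp add: nn_integral_multc nn_integral_chi2_normal_mixture[OF k])
  finally show ?thesis .
qed

lemma student_t_density_nonneg: "student_t_density k x \<ge> 0"
proof -
  have "Gamma ((real k + 1) / 2) > 0"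
    by (intro Gamma_real_pos) simp
  moreover have "Gamma (real k / 2) \<ge> 0"
    by (cases "k = 0") (auto intro: less_imp_le Gamma_real_pos)
  ultimately show ?thesis
    unfolding student_t_density_def by (auto intro!: mult_nonneg_nonneg divide_nonneg_nonneg)
qed

lemma student_t_density_minus: "student_t_density k (- x) = student_t_density k x"
  unfolding student_t_density_def by simp

lemma student_t_density_le_0: "student_t_density k x \<le> student_t_density k 0"
proof -
  define C where "C = Gamma ((real k + 1) / 2) / (sqrt (real k * pi) * Gamma (real k / 2))"
  have "C \<ge> 0"
    using student_t_density_nonneg[of k 0] by (simp add: student_t_density_def C_def)
  moreover have "(1 + x\<^sup>2 / real k) powr (- (real k + 1) / 2) \<le> 1 powr (- (real k + 1) / 2)"
    by (intro powr_mono2') (auto simp: divide_nonpos_nonneg)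
  ultimately have "C * (1 + x\<^sup>2 / real k) powr (- (real k + 1) / 2) \<le> C * 1"
    by (intro mult_left_mono) auto
  then show ?thesis
    unfolding student_t_density_def C_def[symmetric] by simp
qed

lemma nn_integral_student_t_density:
  assumes k: "k > 0"
  shows "(\<integral>\<^sup>+x. ennreal (student_t_density k x) \<partial>lborel) = 1"
proof -
  have "(\<integral>\<^sup>+x. ennreal (student_t_density k x) \<partial>lborel)
      = (\<integral>\<^sup>+W. ennreal (chi2_density k W) * (\<integral>\<^sup>+z. ennreal (std_normal_density z) \<partial>lborel) \<partial>lborel)"
    using nn_integral_student_t_density_mixture[OF k, of "\<lambda>_. 1"] by simp
  also have "\<dots> = 1"
    using nn_integral_chi2_density[OF k]
    by (simp add: nn_integral_eq_integral normal_density_nonneg)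
  finally show ?thesis .
qed

lemma integrable_student_t_density: "k > 0 \<Longrightarrow> integrable lborel (student_t_density k)"
  by (rule integrableI_bounded) (auto simp: student_t_density_nonneg nn_integral_student_t_density)

lemma ennreal_student_t_cdf:
  assumes k: "k > 0"
  shows "ennreal (student_t_cdf k t)
    = (\<integral>\<^sup>+x. ennreal (student_t_density k x * indicator {..t} x) \<partial>lborel)"
proof -
  have "integrable lborel (\<lambda>x. student_t_density k x * indicator {..t} x)"
    using integrable_mult_indicator[OF _ integrable_student_t_density[OF k], of "{..t}"]
    by (simp add: mult.commute)
  moreover have "student_t_cdf k t = (\<integral>x. student_t_density k x * indicator {..t} x \<partial>lborel)"
    unfolding student_t_cdf_def set_lebesgue_integral_def by (simp add: mult.commute)
  ultimately show ?thesis
    by (simp add: nn_integral_eq_integral student_t_density_nonneg)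
qed

lemma student_t_cdf_nonneg: "student_t_cdf k t \<ge> 0"
  unfolding student_t_cdf_def set_lebesgue_integral_def
  by (intro integral_nonneg_AE) (auto simp: student_t_density_nonneg)

lemma student_t_cdf_mono:
  assumes k: "k > 0" and "s \<le> t"
  shows "student_t_cdf k s \<le> student_t_cdf k t"
proof -
  have "ennreal (student_t_cdf k s) \<le> ennreal (student_t_cdf k t)"
    unfolding ennreal_student_t_cdf[OF k] using \<open>s \<le> t\<close>
    by (intro nn_integral_mono) (auto simp: indicator_def student_t_density_nonneg)
  then show ?thesis
    using student_t_cdf_nonneg by simp
qed

lemma student_t_cdf_diff_le:
  assumes k: "k > 0" and "s \<le> t"
  shows "student_t_cdf k t - student_t_cdf k s \<le> student_t_density k 0 * (t - s)"
proof -
  have M: "student_t_density k 0 \<ge> 0"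
    by (rule student_t_density_nonneg)
  have "ennreal (student_t_cdf k t) = (\<integral>\<^sup>+x. ennreal (student_t_density k x * indicator {..s} x)
      + ennreal (student_t_density k x * indicator {s<..t} x) \<partial>lborel)"
    unfolding ennreal_student_t_cdf[OF k] using \<open>s \<le> t\<close>
    by (intro nn_integral_cong) (auto simp: indicator_def)
  also have "\<dots> = ennreal (student_t_cdf k s)
      + (\<integral>\<^sup>+x. ennreal (student_t_density k x * indicator {s<..t} x) \<partial>lborel)"
    by (subst nn_integral_add) (auto simp: ennreal_student_t_cdf[OF k])
  also have "(\<integral>\<^sup>+x. ennreal (student_t_density k x * indicator {s<..t} x) \<partial>lborel)
      \<le> (\<integral>\<^sup>+x. ennreal (student_t_density k 0) * indicator {s<..t} x \<partial>lborel)"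
    by (intro nn_integral_mono) (auto simp: indicator_def ennreal_leI student_t_density_le_0)
  also have "\<dots> = ennreal (student_t_density k 0 * (t - s))"
    using \<open>s \<le> t\<close> M by (simp add: nn_integral_cmult_indicator ennreal_mult)
  finally have "ennreal (student_t_cdf k t)
      \<le> ennreal (student_t_cdf k s + student_t_density k 0 * (t - s))"
    using \<open>s \<le> t\<close> M student_t_cdf_nonneg[of k s]
    by (simp add: ennreal_plus[symmetric] del: ennreal_plus)
  then show ?thesis
    using \<open>s \<le> t\<close> M student_t_cdf_nonneg[of k s] by (subst (asm) ennreal_le_iff) auto
qed

lemma continuous_on_student_t_cdf:
  assumes k: "k > 0"
  shows "continuous_on UNIV (student_t_cdf k)"
proof (rule lipschitz_on_continuous_on)
  show "(student_t_density k 0)-lipschitz_on UNIV (student_t_cdf k)"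
  proof (rule lipschitz_onI)
    show "dist (student_t_cdf k x) (student_t_cdf k y) \<le> student_t_density k 0 * dist x y" for x y
      using student_t_cdf_diff_le[OF k, of x y] student_t_cdf_diff_le[OF k, of y x]
        student_t_cdf_mono[OF k, of x y] student_t_cdf_mono[OF k, of y x]
      by (cases "x \<le> y") (auto simp: dist_real_def)
  qed (rule student_t_density_nonneg)
qed

lemma nn_integral_student_t_density_abs_ge:
  assumes k: "k > 0" and u: "u \<ge> 0"
  shows "(\<integral>\<^sup>+x. ennreal (student_t_density k x * indicator {x. u \<le> \<bar>x\<bar>} x) \<partial>lborel)
    = ennreal (2 * student_t_cdf k (- u))"
proof -
  have "(\<integral>\<^sup>+x. ennreal (student_t_density k x * indicator {x. u \<le> \<bar>x\<bar>} x) \<partial>lborel)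
     = (\<integral>\<^sup>+x. ennreal (student_t_density k x * indicator {..- u} x)
       + ennreal (student_t_density k x * indicator {u<..} x) \<partial>lborel)"
    using AE_lborel_singleton[of u]
    by (intro nn_integral_cong_AE, eventually_elim) (use u in \<open>auto simp: indicator_def\<close>)
  also have "\<dots> = (\<integral>\<^sup>+x. ennreal (student_t_density k x * indicator {..- u} x) \<partial>lborel)
      + (\<integral>\<^sup>+x. ennreal (student_t_density k x * indicator {u<..} x) \<partial>lborel)"
    by (rule nn_integral_add) auto
  also have "(\<integral>\<^sup>+x. ennreal (student_t_density k x * indicator {u<..} x) \<partial>lborel)
      = (\<integral>\<^sup>+x. ennreal (student_t_density k (- x) * indicator {u<..} (- x)) \<partial>lborel)"
    using nn_integral_real_affine[of "\<lambda>x. ennreal (student_t_density k x * indicator {u<..} x)" "-1" 0]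
    by simp
  also have "\<dots> = (\<integral>\<^sup>+x. ennreal (student_t_density k x * indicator {..- u} x) \<partial>lborel)"
    using AE_lborel_singleton[of "- u"]
    by (intro nn_integral_cong_AE, eventually_elim) (auto simp: indicator_def student_t_density_minus)
  also have "\<dots> = ennreal (student_t_cdf k (- u))"
    by (rule ennreal_student_t_cdf[OF k, symmetric])
  finally show ?thesis
    using student_t_cdf_nonneg[of k "- u"] by (simp add: ennreal_plus[symmetric] del: ennreal_plus)
qed

lemma borel_measurable_student_t_cdf [measurable]:
  assumes [measurable]: "g \<in> borel_measurable M"
  shows "(\<lambda>x. student_t_cdf k (g x)) \<in> borel_measurable M"
proof -
  have "(\<lambda>(x, y). indicator {..g x} y *\<^sub>R student_t_density k y) \<in> borel_measurable (M \<Otimes>\<^sub>M borel)"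
    unfolding indicator_def atMost_iff by measurable
  then have "(\<lambda>(x, y). indicator {..g x} y *\<^sub>R student_t_density k y)
      \<in> borel_measurable (M \<Otimes>\<^sub>M lborel)"
    by (subst measurable_cong_sets[OF sets_pair_measure_cong[OF refl sets_lborel] refl])
  then have "(\<lambda>x. \<integral>y. indicator {..g x} y *\<^sub>R student_t_density k y \<partial>lborel) \<in> borel_measurable M"
    by (rule lborel.borel_measurable_lebesgue_integral)
  then show ?thesis
    unfolding student_t_cdf_def set_lebesgue_integral_def by simp
qed

section \<open>Ratios of chi-square variables\<close>

text \<open>The density of \<open>U / V\<close> for independent \<open>U \<sim> \<chi>\<^sup>2\<^sub>a\<close> and \<open>V \<sim> \<chi>\<^sup>2\<^sub>b\<close>
  (the beta prime law with parameters \<open>a/2\<close> and \<open>b/2\<close>).\<close>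

definition beta_prime_density :: "nat \<Rightarrow> nat \<Rightarrow> real \<Rightarrow> real" where
  "beta_prime_density a b y = indicator {0<..} y * y powr (real a / 2 - 1)
     * (1 + y) powr (- (real a / 2 + real b / 2)) / Beta (real a / 2) (real b / 2)"

lemma borel_measurable_beta_prime_density [measurable]:
  "beta_prime_density a b \<in> borel_measurable borel"
  unfolding beta_prime_density_def[abs_def] by measurable

lemma beta_prime_density_nonpos: "y \<le> 0 \<Longrightarrow> beta_prime_density a b y = 0"
  by (simp add: beta_prime_density_def)

lemma beta_prime_density_nonneg: "a > 0 \<Longrightarrow> b > 0 \<Longrightarrow> beta_prime_density a b y \<ge> 0"
  unfolding beta_prime_density_def Beta_def
  by (auto intro!: divide_nonneg_pos mult_pos_pos Gamma_real_pos)

text \<open>The Jacobian identity behind the change of variables \<open>(U, V) \<mapsto> (U / V, U + V)\<close>.\<close>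

lemma chi2_density_ratio_sum_eq:
  fixes y W :: real and a b :: nat
  assumes a: "a > 0" and b: "b > 0" and y: "y > 0"
  shows "1 / (1 + y) * (W / (1 + y) * chi2_density a (W / (1 + y) * y) * chi2_density b (W / (1 + y)))
       = beta_prime_density a b y * chi2_density (a + b) W"
proof (cases "W > 0")
  case False
  then have "W / (1 + y) \<le> 0"
    using y by (simp add: divide_nonpos_pos)
  then show ?thesis
    using False by (simp add: chi2_density_nonpos)
next
  case True
  define p where "p = real a / 2"
  define q where "q = real b / 2"
  define u where "u = W / (1 + y)"
  have "p > 0" "q > 0"
    using a b by (auto simp: p_def q_def)
  then have Gamma_pos: "Gamma p > 0" "Gamma q > 0" "Gamma (p + q) > 0"
    by (auto simp: Gamma_real_pos)
  have u: "u > 0"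
    using True y by (simp add: u_def)
  have y1: "1 + y > 0"
    using y by simp
  have powr_uy: "(u * y) powr (p - 1) = u powr (p - 1) * y powr (p - 1)"
    using u y by (simp add: powr_mult)
  have powr_u: "u * (u powr (p - 1) * u powr (q - 1)) = u powr (p + q - 1)"
    using u powr_add[of u "p - 1" "q - 1"] powr_mult_base[of u "p + q - 2"]
    by (simp add: algebra_simps)
  have powr_W: "u powr (p + q - 1) = W powr (p + q - 1) / (1 + y) powr (p + q - 1)"
    using True y by (simp add: u_def powr_divide)
  have powr_y1: "(1 + y) * (1 + y) powr (p + q - 1) = (1 + y) powr (p + q)"
    using y1 powr_mult_base[of "1 + y" "p + q - 1"] by simp
  have powr_y1_inverse: "(1 + y) powr (p + q) * (1 + y) powr (- p - q) = 1"
    using y1 by (simp add: powr_add[symmetric])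
  have "u * (1 + y) = W"
    using y1 by (simp add: u_def)
  then have "- (u * y) / 2 + - u / 2 = - W / 2"
    by (simp add: algebra_simps add_divide_distrib[symmetric])
  then have exp_eq: "exp (- (u * y) / 2) * exp (- u / 2) = exp (- W / 2)"
    by (simp add: exp_add[symmetric])
  have powr_2: "(2::real) powr p * 2 powr q = 2 powr (p + q)"
    by (simp add: powr_add)
  have ab: "real (a + b) / 2 = p + q"
    by (simp add: p_def q_def add_divide_distrib)
  have "1 / (1 + y) * (W / (1 + y) * chi2_density a (W / (1 + y) * y) * chi2_density b (W / (1 + y)))
     = 1 / (1 + y) * (u * ((u * y) powr (p - 1) * exp (- (u * y) / 2) / (2 powr p * Gamma p))
         * (u powr (q - 1) * exp (- u / 2) / (2 powr q * Gamma q)))"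
    using u y by (simp add: chi2_density_def u_def[symmetric] p_def q_def)
  also have "\<dots> = (u * (u powr (p - 1) * u powr (q - 1))) * y powr (p - 1)
      * (exp (- (u * y) / 2) * exp (- u / 2)) / ((1 + y) * (2 powr p * 2 powr q) * Gamma p * Gamma q)"
    unfolding powr_uy by (simp add: field_simps)
  also have "\<dots> = W powr (p + q - 1) * y powr (p - 1) * exp (- W / 2)
      / (((1 + y) * (1 + y) powr (p + q - 1)) * 2 powr (p + q) * Gamma p * Gamma q)"
    unfolding powr_u powr_W exp_eq powr_2 using y1 by (simp add: field_simps)
  also have "\<dots> = beta_prime_density a b y * chi2_density (a + b) W"
    unfolding powr_y1 beta_prime_density_def chi2_density_def ab using y True Gamma_pos
    by (simp add: p_def[symmetric] q_def[symmetric] powr_y1_inverse Beta_def field_simps)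
  finally show ?thesis .
qed

lemma nn_integral_chi2_ratio_slice:
  fixes F :: "real \<Rightarrow> real \<Rightarrow> ennreal" and a b :: nat
  assumes a: "a > 0" and b: "b > 0"
    and [measurable]: "case_prod F \<in> borel_measurable (borel \<Otimes>\<^sub>M borel)"
  shows "(\<integral>\<^sup>+V. ennreal (V * chi2_density a (V * y) * chi2_density b V) * F (V * y) V \<partial>lborel)
    = ennreal (beta_prime_density a b y) *
      (\<integral>\<^sup>+W. ennreal (chi2_density (a + b) W) * F (W / (1 + y) * y) (W / (1 + y)) \<partial>lborel)"
proof (cases "y > 0")
  case False
  have vanish: "V * chi2_density a (V * y) * chi2_density b V = 0" for V
    using False by (cases "V > 0") (auto simp: chi2_density_nonpos mult_le_0_iff)
  have "beta_prime_density a b y = 0"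
    using False by (simp add: beta_prime_density_nonpos)
  then show ?thesis
    by (simp only: vanish ennreal_0 mult_zero_left) simp
next
  case True
  note borel_measurable_case_prod_comp[OF assms(3), measurable]
  have c: "1 / (1 + y) > 0"
    using True by simp
  have "(\<integral>\<^sup>+V. ennreal (V * chi2_density a (V * y) * chi2_density b V) * F (V * y) V \<partial>lborel)
     = ennreal (1 / (1 + y)) * (\<integral>\<^sup>+W. ennreal (1 / (1 + y) * W * chi2_density a (1 / (1 + y) * W * y)
        * chi2_density b (1 / (1 + y) * W)) * F (1 / (1 + y) * W * y) (1 / (1 + y) * W) \<partial>lborel)"
    using c by (rule nn_integral_lborel_scale[rotated]) simp
  also have "\<dots> = (\<integral>\<^sup>+W. ennreal (1 / (1 + y) * (W / (1 + y) * chi2_density a (W / (1 + y) * y)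
        * chi2_density b (W / (1 + y)))) * F (W / (1 + y) * y) (W / (1 + y)) \<partial>lborel)"
    using c by (subst nn_integral_cmult[symmetric])
      (auto intro!: nn_integral_cong simp: ennreal_mult'[symmetric] mult.assoc[symmetric])
  also have "\<dots> = (\<integral>\<^sup>+W. ennreal (beta_prime_density a b y) *
      (ennreal (chi2_density (a + b) W) * F (W / (1 + y) * y) (W / (1 + y))) \<partial>lborel)"
    unfolding chi2_density_ratio_sum_eq[OF a b True]
    by (simp add: ennreal_mult'' chi2_density_nonneg mult.assoc)
  finally show ?thesis
    by (simp add: nn_integral_cmult)
qed

text \<open>For independent \<open>U \<sim> \<chi>\<^sup>2\<^sub>a\<close> and \<open>V \<sim> \<chi>\<^sup>2\<^sub>b\<close>, the ratio \<open>U / V\<close> is beta prime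
  and independent of \<open>U + V \<sim> \<chi>\<^sup>2\<^sub>a\<^sub>+\<^sub>b\<close>.\<close>

lemma nn_integral_chi2_pair_ratio_sum:
  fixes F :: "real \<Rightarrow> real \<Rightarrow> ennreal" and a b :: nat
  assumes a: "a > 0" and b: "b > 0"
    and [measurable]: "case_prod F \<in> borel_measurable (borel \<Otimes>\<^sub>M borel)"
  shows "(\<integral>\<^sup>+U. ennreal (chi2_density a U) *
      (\<integral>\<^sup>+V. ennreal (chi2_density b V) * F U V \<partial>lborel) \<partial>lborel)
    = (\<integral>\<^sup>+y. ennreal (beta_prime_density a b y) *
      (\<integral>\<^sup>+W. ennreal (chi2_density (a + b) W) * F (W / (1 + y) * y) (W / (1 + y)) \<partial>lborel) \<partial>lborel)"
proof -
  note borel_measurable_case_prod_comp[OF assms(3), measurable]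
  have "(\<integral>\<^sup>+U. ennreal (chi2_density a U) *
      (\<integral>\<^sup>+V. ennreal (chi2_density b V) * F U V \<partial>lborel) \<partial>lborel)
    = (\<integral>\<^sup>+V. ennreal (chi2_density b V) *
      (\<integral>\<^sup>+U. ennreal (chi2_density a U) * F U V \<partial>lborel) \<partial>lborel)"
    by (rule nn_integral_density_swap) measurable
  also have "\<dots> = (\<integral>\<^sup>+V. ennreal (chi2_density b V) *
      (ennreal V * (\<integral>\<^sup>+y. ennreal (chi2_density a (V * y)) * F (V * y) V \<partial>lborel)) \<partial>lborel)"
  proof (rule nn_integral_density_cong)
    fix V :: real
    assume "chi2_density b V > 0"
    then have "V > 0"
      by (metis chi2_density_nonpos less_irrefl not_less)
    then show "(\<integral>\<^sup>+U. ennreal (chi2_density a U) * F U V \<partial>lborel)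
        = ennreal V * (\<integral>\<^sup>+y. ennreal (chi2_density a (V * y)) * F (V * y) V \<partial>lborel)"
      by (rule nn_integral_lborel_scale[rotated]) simp
  qed
  also have "\<dots> = (\<integral>\<^sup>+V. \<integral>\<^sup>+y. ennreal (V * chi2_density a (V * y) * chi2_density b V)
      * F (V * y) V \<partial>lborel \<partial>lborel)"
    by (intro nn_integral_cong)
      (simp add: nn_integral_cmult[symmetric] ennreal_mult'' chi2_density_nonneg mult_ac)
  also have "\<dots> = (\<integral>\<^sup>+y. \<integral>\<^sup>+V. ennreal (V * chi2_density a (V * y) * chi2_density b V)
      * F (V * y) V \<partial>lborel \<partial>lborel)"
    by (subst lborel_pair.Fubini') (auto simp: case_prod_unfold cong: measurable_cong_sets)
  finally show ?thesis
    by (simp only: nn_integral_chi2_ratio_slice[OF a b assms(3)])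
qed

text \<open>Since \<open>\<lambda>\<^sub>h\<^sub>a\<^sub>t = \<lambda> (\<nu>\<^sub>B / \<nu>\<^sub>A) (U / V)\<close> with independent \<open>U \<sim> \<chi>\<^sup>2\<^sub>\<nu>\<^sub>A\<close> and
  \<open>V \<sim> \<chi>\<^sup>2\<^sub>\<nu>\<^sub>B\<close>, its density \<open>p(\<cdot> | \<lambda>)\<close> is a rescaled beta prime density.\<close>

lemma p_ratio_eq_beta_prime_density:
  fixes l lam :: real and KA KB :: nat
  assumes KA: "KA \<ge> 2" and KB: "KB \<ge> 2" and lam: "lam > 0"
  defines "\<kappa> \<equiv> real (KA - 1) / (real (KB - 1) * lam)"
  shows "\<kappa> * beta_prime_density (KA - 1) (KB - 1) (\<kappa> * l) = p_ratio KA KB l lam"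
proof (cases "l > 0")
  case False
  have "\<kappa> > 0"
    using KA KB lam by (simp add: \<kappa>_def)
  then have "\<not> \<kappa> * l > 0"
    using False by (simp add: zero_less_mult_iff)
  then show ?thesis
    using False by (simp add: beta_prime_density_def p_ratio_def)
next
  case True
  define nA where "nA = real (KA - 1)"
  define nB where "nB = real (KB - 1)"
  define p where "p = nA / 2"
  define q where "q = nB / 2"
  have nA: "nA > 0" and nB: "nB > 0"
    using KA KB by (auto simp: nA_def nB_def)
  have \<kappa>: "\<kappa> > 0"
    using KA KB lam by (simp add: \<kappa>_def)
  have \<kappa>_l: "\<kappa> * l = nA * l / (nB * lam)"
    by (simp add: \<kappa>_def nA_def nB_def)
  have exponent: "- (nA + nB) / 2 = - (p + q)"
    by (simp add: p_def q_def field_simps)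
  have powr_\<kappa>_l: "(\<kappa> * l) powr (p - 1) = \<kappa> powr (p - 1) * l powr (p - 1)"
    using \<kappa> True by (simp add: powr_mult)
  have "\<kappa> = (nA / nB) / lam"
    by (simp add: \<kappa>_def nA_def nB_def field_simps)
  then have powr_\<kappa>: "\<kappa> powr p = (nA / nB) powr p / lam powr p"
    using nA nB lam by (simp add: powr_divide powr_mult)
  have powr_\<kappa>_self: "\<kappa> * \<kappa> powr (p - 1) = \<kappa> powr p"
    using powr_mult_base[OF less_imp_le[OF \<kappa>], of "p - 1"] by simp
  have powr_l_lam: "(l / lam) powr (p - 1) = l powr (p - 1) / lam powr (p - 1)"
    using True lam by (simp add: powr_divide)
  have powr_lam: "lam powr p = lam * lam powr (p - 1)"
    using powr_mult_base[OF less_imp_le[OF lam], of "p - 1"] by simp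
  have Beta_pos: "Beta p q > 0"
    using nA nB unfolding Beta_def p_def q_def by (auto intro!: divide_pos_pos Gamma_real_pos)
  have p_ratio_eq: "p_ratio KA KB l lam = 1 / lam * (1 / Beta p q) * (nA / nB) powr p
      * (l / lam) powr (p - 1) * (1 + nA * l / (nB * lam)) powr (- (nA + nB) / 2)"
    unfolding p_ratio_def Let_def nA_def[symmetric] nB_def[symmetric] p_def[symmetric]
      q_def[symmetric] using True by simp
  have "real (KA - 1) / 2 = p" "real (KB - 1) / 2 = q"
    by (simp_all add: p_def q_def nA_def nB_def)
  then have "\<kappa> * beta_prime_density (KA - 1) (KB - 1) (\<kappa> * l)
      = (\<kappa> * \<kappa> powr (p - 1)) * l powr (p - 1) * (1 + \<kappa> * l) powr (- (p + q)) / Beta p q"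
    unfolding beta_prime_density_def using True \<kappa> by (simp add: powr_\<kappa>_l)
  also have "\<dots> = p_ratio KA KB l lam"
    unfolding p_ratio_eq exponent powr_l_lam powr_\<kappa>_self powr_\<kappa> \<kappa>_l powr_lam
    using lam Beta_pos by (simp add: field_simps)
  finally show ?thesis .
qed

lemma nn_integral_beta_prime_density_rescale:
  fixes H :: "real \<Rightarrow> ennreal" and KA KB :: nat and lam :: real
  assumes KA: "KA \<ge> 2" and KB: "KB \<ge> 2" and lam: "lam > 0"
    and [measurable]: "H \<in> borel_measurable borel"
  shows "(\<integral>\<^sup>+y. ennreal (beta_prime_density (KA - 1) (KB - 1) y)
      * H (lam * real (KB - 1) / real (KA - 1) * y) \<partial>lborel)
    = (\<integral>\<^sup>+l. ennreal (p_ratio KA KB l lam) * H l \<partial>lborel)"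
proof -
  define \<kappa> where "\<kappa> = real (KA - 1) / (real (KB - 1) * lam)"
  have \<kappa>: "\<kappa> > 0"
    using KA KB lam by (simp add: \<kappa>_def)
  have inverse: "lam * real (KB - 1) / real (KA - 1) * (\<kappa> * l) = l" for l
    using KA KB lam by (simp add: \<kappa>_def)
  have "(\<integral>\<^sup>+y. ennreal (beta_prime_density (KA - 1) (KB - 1) y)
      * H (lam * real (KB - 1) / real (KA - 1) * y) \<partial>lborel)
    = ennreal \<kappa> * (\<integral>\<^sup>+l. ennreal (beta_prime_density (KA - 1) (KB - 1) (\<kappa> * l))
      * H (lam * real (KB - 1) / real (KA - 1) * (\<kappa> * l)) \<partial>lborel)"
    using \<kappa> by (rule nn_integral_lborel_scale[rotated]) simp
  also have "\<dots> = (\<integral>\<^sup>+l. ennreal (\<kappa> * beta_prime_density (KA - 1) (KB - 1) (\<kappa> * l)) * H l \<partial>lborel)"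
    unfolding inverse using \<kappa> KA KB by (subst nn_integral_cmult[symmetric])
      (auto intro!: nn_integral_cong simp: ennreal_mult beta_prime_density_nonneg mult.assoc)
  also have "\<dots> = (\<integral>\<^sup>+l. ennreal (p_ratio KA KB l lam) * H l \<partial>lborel)"
    unfolding \<kappa>_def p_ratio_eq_beta_prime_density[OF KA KB lam] ..
  finally show ?thesis .
qed

lemma borel_measurable_p_ratio [measurable]:
  assumes [measurable]: "g \<in> borel_measurable M" "h \<in> borel_measurable M"
  shows "(\<lambda>x. p_ratio KA KB (g x) (h x)) \<in> borel_measurable M"
  unfolding p_ratio_def Let_def by measurable

lemma p_ratio_nonneg:
  assumes "KA \<ge> 2" "KB \<ge> 2" "lam > 0"
  shows "p_ratio KA KB l lam \<ge> 0"
  using assms p_ratio_eq_beta_prime_density[OF assms, of l, symmetric]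
  by (simp add: beta_prime_density_nonneg)

lemma nn_integral_beta_prime_density:
  assumes "a > 0" "b > 0"
  shows "(\<integral>\<^sup>+y. ennreal (beta_prime_density a b y) \<partial>lborel) = 1"
  using nn_integral_chi2_pair_ratio_sum[OF assms, of "\<lambda>_ _. 1"] assms
  by (simp add: nn_integral_chi2_density)

lemma nn_integral_p_ratio:
  assumes "KA \<ge> 2" "KB \<ge> 2" "lam > 0"
  shows "(\<integral>\<^sup>+l. ennreal (p_ratio KA KB l lam) \<partial>lborel) = 1"
  using nn_integral_beta_prime_density_rescale[OF assms, of "\<lambda>_. 1"] assms
  by (simp add: nn_integral_beta_prime_density)

section \<open>The joint law of the Welch statistic and the variance ratio\<close>

lemma nn_integral_pair4:
  assumes "prob_space M2" "prob_space M3" "prob_space M4"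
    and G: "G \<in> borel_measurable (M1 \<Otimes>\<^sub>M (M2 \<Otimes>\<^sub>M (M3 \<Otimes>\<^sub>M M4)))"
  shows "integral\<^sup>N (M1 \<Otimes>\<^sub>M (M2 \<Otimes>\<^sub>M (M3 \<Otimes>\<^sub>M M4))) G
    = (\<integral>\<^sup>+x1. \<integral>\<^sup>+x2. \<integral>\<^sup>+x3. \<integral>\<^sup>+x4. G (x1, x2, x3, x4) \<partial>M4 \<partial>M3 \<partial>M2 \<partial>M1)"
proof -
  interpret M4: prob_space M4 by fact
  interpret M34: prob_space "M3 \<Otimes>\<^sub>M M4"
    by (intro prob_space_pair assms)
  interpret M234: prob_space "M2 \<Otimes>\<^sub>M (M3 \<Otimes>\<^sub>M M4)"
    by (intro prob_space_pair assms)
  have "integral\<^sup>N (M1 \<Otimes>\<^sub>M (M2 \<Otimes>\<^sub>M (M3 \<Otimes>\<^sub>M M4))) G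
      = (\<integral>\<^sup>+x1. \<integral>\<^sup>+p. G (x1, p) \<partial>(M2 \<Otimes>\<^sub>M (M3 \<Otimes>\<^sub>M M4)) \<partial>M1)"
    by (rule M234.nn_integral_fst[symmetric, OF G])
  also have "\<dots> = (\<integral>\<^sup>+x1. \<integral>\<^sup>+x2. \<integral>\<^sup>+q. G (x1, x2, q) \<partial>(M3 \<Otimes>\<^sub>M M4) \<partial>M2 \<partial>M1)"
    using measurable_Pair2[OF G] by (intro nn_integral_cong M34.nn_integral_fst[symmetric]) auto
  also have "\<dots> = (\<integral>\<^sup>+x1. \<integral>\<^sup>+x2. \<integral>\<^sup>+x3. \<integral>\<^sup>+x4. G (x1, x2, x3, x4) \<partial>M4 \<partial>M3 \<partial>M2 \<partial>M1)"
    using measurable_Pair2[OF measurable_Pair2[OF G]]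
    by (intro nn_integral_cong M4.nn_integral_fst[symmetric]) auto
  finally show ?thesis .
qed

lemma sets_unit_law:
  "sets (unit_law KA KB mA s mB r) = sets (borel \<Otimes>\<^sub>M (borel \<Otimes>\<^sub>M (borel \<Otimes>\<^sub>M borel)))"
  unfolding unit_law_def by (intro sets_pair_measure_cong) simp_all

lemma prob_space_unit_law:
  assumes "KA \<ge> 2" "KB \<ge> 2" "s > 0" "r > 0"
  shows "prob_space (unit_law KA KB mA s mB r)"
  unfolding unit_law_def using assms
  by (intro prob_space_pair prob_space_normal_law prob_space_scaled_chi2) auto

lemma nn_integral_unit_law:
  fixes G :: "real \<times> real \<times> real \<times> real \<Rightarrow> ennreal"
  assumes KA: "KA \<ge> 2" and KB: "KB \<ge> 2" and s: "s > 0" and r: "r > 0"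
    and [measurable]: "G \<in> borel_measurable (borel \<Otimes>\<^sub>M (borel \<Otimes>\<^sub>M (borel \<Otimes>\<^sub>M borel)))"
  shows "(\<integral>\<^sup>+w. G w \<partial>unit_law KA KB mA s mB r)
    = (\<integral>\<^sup>+x1. ennreal (normal_density mA (sqrt (s / real KA)) x1) *
        (\<integral>\<^sup>+U. ennreal (chi2_density (KA - 1) U) *
          (\<integral>\<^sup>+x3. ennreal (normal_density mB (sqrt (r / real KB)) x3) *
            (\<integral>\<^sup>+V. ennreal (chi2_density (KB - 1) V) *
              G (x1, s / real (KA - 1) * U, x3, r / real (KB - 1) * V)
            \<partial>lborel) \<partial>lborel) \<partial>lborel) \<partial>lborel)" (is "_ = ?R")
proof -
  have "(\<integral>\<^sup>+w. G w \<partial>unit_law KA KB mA s mB r)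
    = (\<integral>\<^sup>+x1. \<integral>\<^sup>+x2. \<integral>\<^sup>+x3. \<integral>\<^sup>+x4. G (x1, x2, x3, x4) \<partial>scaled_chi2 (KB - 1) r
        \<partial>normal_law mB (r / real KB) \<partial>scaled_chi2 (KA - 1) s \<partial>normal_law mA (s / real KA))"
    unfolding unit_law_def using KA KB r
    by (intro nn_integral_pair4 prob_space_scaled_chi2 prob_space_normal_law)
      (auto cong: measurable_cong_sets)
  also have "\<dots> = ?R"
  proof -
    have "(\<integral>\<^sup>+x4. G (x1, x2, x3, x4) \<partial>scaled_chi2 (KB - 1) r)
        = (\<integral>\<^sup>+V. ennreal (chi2_density (KB - 1) V) * G (x1, x2, x3, r / real (KB - 1) * V) \<partial>lborel)"
      for x1 x2 x3
      by (rule nn_integral_scaled_chi2) measurable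
    moreover have "(\<integral>\<^sup>+x3. (\<integral>\<^sup>+V. ennreal (chi2_density (KB - 1) V)
          * G (x1, x2, x3, r / real (KB - 1) * V) \<partial>lborel) \<partial>normal_law mB (r / real KB))
        = (\<integral>\<^sup>+x3. ennreal (normal_density mB (sqrt (r / real KB)) x3) * (\<integral>\<^sup>+V.
          ennreal (chi2_density (KB - 1) V) * G (x1, x2, x3, r / real (KB - 1) * V) \<partial>lborel) \<partial>lborel)"
      for x1 x2
      by (rule nn_integral_normal_law) measurable
    moreover have "(\<integral>\<^sup>+x2. (\<integral>\<^sup>+x3. ennreal (normal_density mB (sqrt (r / real KB)) x3) * (\<integral>\<^sup>+V.
          ennreal (chi2_density (KB - 1) V) * G (x1, x2, x3, r / real (KB - 1) * V) \<partial>lborel) \<partial>lborel)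
          \<partial>scaled_chi2 (KA - 1) s)
        = (\<integral>\<^sup>+U. ennreal (chi2_density (KA - 1) U) *
          (\<integral>\<^sup>+x3. ennreal (normal_density mB (sqrt (r / real KB)) x3) * (\<integral>\<^sup>+V.
          ennreal (chi2_density (KB - 1) V) * G (x1, s / real (KA - 1) * U, x3, r / real (KB - 1) * V)
          \<partial>lborel) \<partial>lborel) \<partial>lborel)"
      for x1
      by (rule nn_integral_scaled_chi2) measurable
    moreover have "(\<integral>\<^sup>+x1. (\<integral>\<^sup>+U. ennreal (chi2_density (KA - 1) U) *
          (\<integral>\<^sup>+x3. ennreal (normal_density mB (sqrt (r / real KB)) x3) * (\<integral>\<^sup>+V.
          ennreal (chi2_density (KB - 1) V) * G (x1, s / real (KA - 1) * U, x3, r / real (KB - 1) * V)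
          \<partial>lborel) \<partial>lborel) \<partial>lborel) \<partial>normal_law mA (s / real KA)) = ?R"
      by (rule nn_integral_normal_law) measurable
    ultimately show ?thesis
      by simp
  qed
  finally show ?thesis .
qed

lemma variance_ratio_identity:
  fixes s r a b A B y W :: real
  assumes s: "s > 0" and r: "r > 0" and a: "a > 0" and b: "b > 0" and A: "A > 0" and B: "B > 0"
    and y: "y > 0" and W: "W > 0"
  defines "l \<equiv> s / r * b / a * y"
  defines "c \<equiv> l / (l + A / B)"
  defines "g \<equiv> (s / r) / (s / r + A / B)"
  shows "(s / A + r / B) / ((s / a * (W / (1 + y) * y)) / A + (r / b * (W / (1 + y))) / B)
       = (a * c / g + b * (1 - c) / (1 - g)) / W"
proof -
  define L where "L = s / r"
  define q where "q = A / B"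
  have L: "L > 0" and q: "q > 0"
    using s r A B by (simp_all add: L_def q_def)
  have l: "l > 0"
    using s r a b y by (simp add: l_def)
  have y1: "1 + y > 0"
    using y by simp
  have l_eq: "l = L * b / a * y"
    by (simp add: l_def L_def)
  have c_div_g: "c / g = l * (L + q) / (L * (l + q))"
    using l L q by (simp add: c_def g_def L_def[symmetric] q_def[symmetric] field_simps)
  have one_minus_c: "1 - c = q / (l + q)" and one_minus_g: "1 - g = q / (L + q)"
    using l L q by (simp_all add: c_def g_def L_def[symmetric] q_def[symmetric] field_simps)
  have complements: "(1 - c) / (1 - g) = (L + q) / (l + q)"
    unfolding one_minus_c one_minus_g using l L q by (simp add: divide_simps)
  have "a * l / L = b * y"
    using L a by (simp add: l_eq field_simps)
  then have numerator: "a * c / g + b * (1 - c) / (1 - g) = (L + q) / (l + q) * (b * (1 + y))"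
    unfolding times_divide_eq_right[symmetric] c_div_g complements using l L q
    by (simp add: divide_simps) (simp add: algebra_simps)
  have sum_eq: "s / A + r / B = r / A * (L + q)"
    using r A B by (simp add: L_def q_def field_simps)
  have denominator: "(s / a * (W / Y * y)) / A + (r / b * (W / Y)) / B
      = W / Y * (r / A) * (L / a * y + q / b)" if "Y > 0" for Y
    using r A B a b that by (simp add: L_def q_def field_simps)
  have "L / a * y + q / b > 0"
    using L q a b y by (simp add: add_pos_pos)
  then have "(s / A + r / B) / ((s / a * (W / (1 + y) * y)) / A + (r / b * (W / (1 + y))) / B)
      = (L + q) * (1 + y) / (W * (L / a * y + q / b))"
    unfolding sum_eq denominator[OF y1] using r A W y1 by (simp add: divide_simps)
  also have "\<dots> = (L + q) / (l + q) * (b * (1 + y)) / W"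
  proof -
    have "L / a * y + q / b = (l + q) / b"
      using a b by (simp add: l_eq field_simps)
    then show ?thesis
      using b W l q y1 by (simp add: divide_simps)
  qed
  finally show ?thesis
    unfolding numerator .
qed

text \<open>After the substitution \<open>U = W y / (1 + y)\<close>, \<open>V = W / (1 + y)\<close> of the chi-square
  variables, the standardised Welch statistic is \<open>\<phi>(\<lambda>, l)\<close> times a Student-\<open>t\<close> variable, with
  \<open>l = \<lambda> \<nu>\<^sub>B y / \<nu>\<^sub>A\<close> the observed variance ratio.\<close>

lemma T_BF_scale_eq_phi_VR:
  fixes s r y W :: real and KA KB :: nat
  assumes KA: "KA \<ge> 2" and KB: "KB \<ge> 2" and s: "s > 0" and r: "r > 0" and y: "y > 0"
    and W: "W > 0"
  shows "sqrt (s / real KA + r / real KB) * z / sqrt (s / real (KA - 1) * (W / (1 + y) * y)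
      / real KA + r / real (KB - 1) * (W / (1 + y)) / real KB)
    = phi_VR KA KB (s / r) (s / r * real (KB - 1) / real (KA - 1) * y)
      * (sqrt (real (KA - 1 + (KB - 1)) / W) * z)"
proof -
  define a where "a = real (KA - 1)"
  define b where "b = real (KB - 1)"
  define l where "l = s / r * b / a * y"
  define c where "c = l / (l + real KA / real KB)"
  define g where "g = (s / r) / (s / r + real KA / real KB)"
  define Z where "Z = a * c / g + b * (1 - c) / (1 - g)"
  define Q where "Q = s / a * (W / (1 + y) * y) / real KA + r / b * (W / (1 + y)) / real KB"
  have a: "a > 0" and b: "b > 0"
    using KA KB by (auto simp: a_def b_def)
  have ratio: "(s / real KA + r / real KB) / Q = Z / W"
    unfolding Q_def Z_def c_def g_def l_def
    using variance_ratio_identity[OF s r a b _ _ y W, of "real KA" "real KB"] KA KB by simp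
  have phi: "phi_VR KA KB (s / r) (s / r * real (KB - 1) / real (KA - 1) * y) = sqrt (Z / (a + b))"
    unfolding phi_VR_def Let_def Z_def c_def g_def l_def a_def b_def by simp
  have "sqrt (s / real KA + r / real KB) / sqrt Q = sqrt (Z / W)"
    by (simp add: real_sqrt_divide[symmetric] ratio)
  also have "\<dots> = sqrt (Z / (a + b)) * sqrt ((a + b) / W)"
    using a b by (simp add: real_sqrt_mult[symmetric])
  finally have sqrt_ratio: "sqrt (s / real KA + r / real KB) / sqrt Q
      = sqrt (Z / (a + b)) * sqrt ((a + b) / W)" .
  have "real (KA - 1 + (KB - 1)) = a + b"
    by (simp add: a_def b_def)
  then show ?thesis
    unfolding phi Q_def[unfolded a_def b_def, symmetric]
    using sqrt_ratio by (metis (no_types, lifting) mult.commute mult.left_commute times_divide_eq_left)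
qed

lemma nn_integral_unit_law_T_BF_lam_hat:
  fixes f :: "real \<Rightarrow> real \<Rightarrow> ennreal"
  assumes KA: "KA \<ge> 2" and KB: "KB \<ge> 2" and s: "s > 0" and r: "r > 0"
    and f: "case_prod f \<in> borel_measurable (borel \<Otimes>\<^sub>M borel)"
  shows "(\<integral>\<^sup>+w. f (T_BF KA KB w) (lam_hat w) \<partial>unit_law KA KB \<mu> s \<mu> r)
    = (\<integral>\<^sup>+U. ennreal (chi2_density (KA - 1) U) * (\<integral>\<^sup>+V. ennreal (chi2_density (KB - 1) V) *
        (\<integral>\<^sup>+z. ennreal (std_normal_density z) *
          f (sqrt (s / real KA + r / real KB) * z
              / sqrt (s / real (KA - 1) * U / real KA + r / real (KB - 1) * V / real KB))
            (s / real (KA - 1) * U / (r / real (KB - 1) * V)) \<partial>lborel) \<partial>lborel) \<partial>lborel)"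
proof -
  note borel_measurable_case_prod_comp[OF f, measurable]
  define Q where "Q U V = s / real (KA - 1) * U / real KA + r / real (KB - 1) * V / real KB" for U V
  define L where "L U V = s / real (KA - 1) * U / (r / real (KB - 1) * V)" for U V
  have [measurable]: "case_prod Q \<in> borel_measurable (borel \<Otimes>\<^sub>M borel)"
    "case_prod L \<in> borel_measurable (borel \<Otimes>\<^sub>M borel)"
    unfolding Q_def L_def by measurable
  note borel_measurable_case_prod_comp[of Q, measurable]
    borel_measurable_case_prod_comp[of L, measurable]
  have "(\<integral>\<^sup>+w. f (T_BF KA KB w) (lam_hat w) \<partial>unit_law KA KB \<mu> s \<mu> r)
    = (\<integral>\<^sup>+x1. ennreal (normal_density \<mu> (sqrt (s / real KA)) x1) *
        (\<integral>\<^sup>+U. ennreal (chi2_density (KA - 1) U) *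
          (\<integral>\<^sup>+x3. ennreal (normal_density \<mu> (sqrt (r / real KB)) x3) *
            (\<integral>\<^sup>+V. ennreal (chi2_density (KB - 1) V) * f ((x1 - x3) / sqrt (Q U V)) (L U V)
            \<partial>lborel) \<partial>lborel) \<partial>lborel) \<partial>lborel)"
    by (subst nn_integral_unit_law[OF KA KB s r])
      (simp_all add: T_BF_def lam_hat_def Q_def L_def split_beta')
  also have "\<dots> = (\<integral>\<^sup>+U. ennreal (chi2_density (KA - 1) U) *
        (\<integral>\<^sup>+V. ennreal (chi2_density (KB - 1) V) *
          (\<integral>\<^sup>+x1. ennreal (normal_density \<mu> (sqrt (s / real KA)) x1) *
            (\<integral>\<^sup>+x3. ennreal (normal_density \<mu> (sqrt (r / real KB)) x3) *
              f ((x1 - x3) / sqrt (Q U V)) (L U V)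
            \<partial>lborel) \<partial>lborel) \<partial>lborel) \<partial>lborel)"
    by (rule nn_integral_density_reorder4) measurable
  also have "\<dots> = (\<integral>\<^sup>+U. ennreal (chi2_density (KA - 1) U) * (\<integral>\<^sup>+V. ennreal (chi2_density (KB - 1) V) *
        (\<integral>\<^sup>+z. ennreal (std_normal_density z) *
          f (sqrt (s / real KA + r / real KB) * z / sqrt (Q U V)) (L U V) \<partial>lborel) \<partial>lborel) \<partial>lborel)"
    using KA KB s r
    by (intro nn_integral_cong arg_cong[where f="(*) _"]
        nn_integral_normal_density_diff_std[where h="\<lambda>d. f (d / sqrt (Q _ _)) (L _ _)"]) auto
  finally show ?thesis
    unfolding Q_def L_def .
qed

lemma borel_measurable_phi_VR [measurable]:
  assumes [measurable]: "g \<in> borel_measurable M" "h \<in> borel_measurable M"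
  shows "(\<lambda>x. phi_VR KA KB (g x) (h x)) \<in> borel_measurable M"
  unfolding phi_VR_def Let_def by measurable

lemma nn_integral_chi2_pair_T_BF_lam_hat:
  fixes f :: "real \<Rightarrow> real \<Rightarrow> ennreal"
  assumes KA: "KA \<ge> 2" and KB: "KB \<ge> 2" and s: "s > 0" and r: "r > 0"
    and f: "case_prod f \<in> borel_measurable (borel \<Otimes>\<^sub>M borel)"
  shows "(\<integral>\<^sup>+U. ennreal (chi2_density (KA - 1) U) * (\<integral>\<^sup>+V. ennreal (chi2_density (KB - 1) V) *
        (\<integral>\<^sup>+z. ennreal (std_normal_density z) *
          f (sqrt (s / real KA + r / real KB) * z
              / sqrt (s / real (KA - 1) * U / real KA + r / real (KB - 1) * V / real KB))
            (s / real (KA - 1) * U / (r / real (KB - 1) * V)) \<partial>lborel) \<partial>lborel) \<partial>lborel)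
    = (\<integral>\<^sup>+l. ennreal (p_ratio KA KB l (s / r)) *
        (\<integral>\<^sup>+x. ennreal (student_t_density (KA - 1 + (KB - 1)) x)
          * f (phi_VR KA KB (s / r) l * x) l \<partial>lborel) \<partial>lborel)"
proof -
  note borel_measurable_case_prod_comp[OF f, measurable]
  define \<nu> where "\<nu> = KA - 1 + (KB - 1)"
  define T where "T U V z = sqrt (s / real KA + r / real KB) * z
    / sqrt (s / real (KA - 1) * U / real KA + r / real (KB - 1) * V / real KB)" for U V z
  define \<Lambda> where "\<Lambda> U V = s / real (KA - 1) * U / (r / real (KB - 1) * V)" for U V
  define lhat where "lhat y = s / r * real (KB - 1) / real (KA - 1) * y" for y
  define H where
    "H l = (\<integral>\<^sup>+x. ennreal (student_t_density \<nu> x) * f (phi_VR KA KB (s / r) l * x) l \<partial>lborel)" for l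
  have "(\<lambda>(U, V). \<integral>\<^sup>+z. ennreal (std_normal_density z) * f (T U V z) (\<Lambda> U V) \<partial>lborel)
      \<in> borel_measurable (borel \<Otimes>\<^sub>M borel)"
    unfolding T_def \<Lambda>_def by measurable
  then have "(\<integral>\<^sup>+U. ennreal (chi2_density (KA - 1) U) * (\<integral>\<^sup>+V. ennreal (chi2_density (KB - 1) V) *
        (\<integral>\<^sup>+z. ennreal (std_normal_density z) * f (T U V z) (\<Lambda> U V) \<partial>lborel) \<partial>lborel) \<partial>lborel)
    = (\<integral>\<^sup>+y. ennreal (beta_prime_density (KA - 1) (KB - 1) y) * (\<integral>\<^sup>+W. ennreal (chi2_density \<nu> W) *
        (\<integral>\<^sup>+z. ennreal (std_normal_density z) * f (T (W / (1 + y) * y) (W / (1 + y)) z)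
          (\<Lambda> (W / (1 + y) * y) (W / (1 + y))) \<partial>lborel) \<partial>lborel) \<partial>lborel)"
    using KA KB unfolding \<nu>_def by (intro nn_integral_chi2_pair_ratio_sum) auto
  also have "\<dots> = (\<integral>\<^sup>+y. ennreal (beta_prime_density (KA - 1) (KB - 1) y) *
      (\<integral>\<^sup>+W. ennreal (chi2_density \<nu> W) * (\<integral>\<^sup>+z. ennreal (std_normal_density z) *
        f (phi_VR KA KB (s / r) (lhat y) * (sqrt (real \<nu> / W) * z)) (lhat y) \<partial>lborel) \<partial>lborel) \<partial>lborel)"
  proof (intro nn_integral_density_cong arg_cong[where f="(*) _"] nn_integral_cong)
    fix y W z :: real
    assume "beta_prime_density (KA - 1) (KB - 1) y > 0" and "chi2_density \<nu> W > 0"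
    then have y: "y > 0" and W: "W > 0"
      by (metis beta_prime_density_nonpos chi2_density_nonpos less_irrefl not_less)+
    have "s / a * (W / Y * y) / (r / b * (W / Y)) = s / r * b / a * y"
      if "a > 0" "b > 0" "Y > 0" for a b Y :: real
      using that W r by (simp add: field_simps)
    then have "\<Lambda> (W / (1 + y) * y) (W / (1 + y)) = lhat y"
      using y KA KB unfolding \<Lambda>_def lhat_def by simp
    moreover have "T (W / (1 + y) * y) (W / (1 + y)) z
        = phi_VR KA KB (s / r) (lhat y) * (sqrt (real \<nu> / W) * z)"
      unfolding T_def lhat_def \<nu>_def by (rule T_BF_scale_eq_phi_VR[OF KA KB s r y W])
    ultimately show "f (T (W / (1 + y) * y) (W / (1 + y)) z) (\<Lambda> (W / (1 + y) * y) (W / (1 + y)))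
        = f (phi_VR KA KB (s / r) (lhat y) * (sqrt (real \<nu> / W) * z)) (lhat y)"
      by simp
  qed
  also have "\<dots> = (\<integral>\<^sup>+y. ennreal (beta_prime_density (KA - 1) (KB - 1) y) * H (lhat y) \<partial>lborel)"
    using KA unfolding H_def \<nu>_def
    by (intro nn_integral_cong arg_cong[where f="(*) _"] nn_integral_student_t_density_mixture)
      measurable
  also have "\<dots> = (\<integral>\<^sup>+l. ennreal (p_ratio KA KB l (s / r)) * H l \<partial>lborel)"
  proof -
    have "H \<in> borel_measurable borel"
      unfolding H_def by measurable
    then show ?thesis
      unfolding lhat_def using s r by (intro nn_integral_beta_prime_density_rescale KA KB) auto
  qed
  finally show ?thesis
    unfolding H_def \<nu>_def T_def \<Lambda>_def .
qed

lemma nn_integral_unit_law_null: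
  fixes f :: "real \<Rightarrow> real \<Rightarrow> ennreal"
  assumes "KA \<ge> 2" "KB \<ge> 2" "s > 0" "r > 0"
    and "case_prod f \<in> borel_measurable (borel \<Otimes>\<^sub>M borel)"
  shows "(\<integral>\<^sup>+w. f (T_BF KA KB w) (lam_hat w) \<partial>unit_law KA KB \<mu> s \<mu> r)
    = (\<integral>\<^sup>+l. ennreal (p_ratio KA KB l (s / r)) *
        (\<integral>\<^sup>+x. ennreal (student_t_density (KA - 1 + (KB - 1)) x)
          * f (phi_VR KA KB (s / r) l * x) l \<partial>lborel) \<partial>lborel)"
  unfolding nn_integral_unit_law_T_BF_lam_hat[OF assms]
  by (rule nn_integral_chi2_pair_T_BF_lam_hat[OF assms])

lemma emeasure_unit_law_null:
  assumes KA: "KA \<ge> 2" and KB: "KB \<ge> 2" and s: "s > 0" and r: "r > 0"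
    and R: "R \<in> sets (borel \<Otimes>\<^sub>M borel)"
  shows "emeasure (unit_law KA KB \<mu> s \<mu> r) {w. (T_BF KA KB w, lam_hat w) \<in> R}
    = (\<integral>\<^sup>+l. ennreal (p_ratio KA KB l (s / r)) *
        (\<integral>\<^sup>+x. ennreal (student_t_density (KA - 1 + (KB - 1)) x)
          * indicator R (phi_VR KA KB (s / r) l * x, l) \<partial>lborel) \<partial>lborel)"
proof -
  have "(\<lambda>w. (T_BF KA KB w, lam_hat w))
      \<in> measurable (borel \<Otimes>\<^sub>M (borel \<Otimes>\<^sub>M (borel \<Otimes>\<^sub>M borel))) (borel \<Otimes>\<^sub>M borel)"
    unfolding T_BF_def lam_hat_def by measurable
  from measurable_sets[OF this R]
  have "{w. (T_BF KA KB w, lam_hat w) \<in> R} \<in> sets (unit_law KA KB \<mu> s \<mu> r)"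
    by (simp add: sets_unit_law space_pair_measure vimage_def)
  then have "emeasure (unit_law KA KB \<mu> s \<mu> r) {w. (T_BF KA KB w, lam_hat w) \<in> R}
      = (\<integral>\<^sup>+w. indicator R (T_BF KA KB w, lam_hat w) \<partial>unit_law KA KB \<mu> s \<mu> r)"
    by (simp add: nn_integral_indicator[symmetric] indicator_def)
  also have "\<dots> = (\<integral>\<^sup>+l. ennreal (p_ratio KA KB l (s / r)) *
        (\<integral>\<^sup>+x. ennreal (student_t_density (KA - 1 + (KB - 1)) x)
          * indicator R (phi_VR KA KB (s / r) l * x, l) \<partial>lborel) \<partial>lborel)"
    using borel_measurable_indicator[OF R]
    by (intro nn_integral_unit_law_null[OF KA KB s r, of "\<lambda>t l. indicator R (t, l)"]) simp
  finally show ?thesis .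
qed

section \<open>Mixture p-values\<close>

text \<open>The two-sided p-value of \<open>\<bar>t\<bar> = u\<close> under the mixture, with weights \<open>w i\<close>, of the laws
  of \<open>\<phi> i * X\<close> for \<open>X \<sim> t\<^sub>k\<close>.\<close>

definition mixture_pvalue :: "nat \<Rightarrow> nat set \<Rightarrow> (nat \<Rightarrow> real) \<Rightarrow> (nat \<Rightarrow> real) \<Rightarrow> real \<Rightarrow> real" where
  "mixture_pvalue k J w \<phi> u = (\<Sum>i\<in>J. 2 * student_t_cdf k (- u / \<phi> i) * w i) / (\<Sum>i\<in>J. w i)"

lemma mixture_pvalue_antimono:
  assumes k: "k > 0" and w: "\<And>i. i \<in> J \<Longrightarrow> w i \<ge> 0" and \<phi>: "\<And>i. i \<in> J \<Longrightarrow> \<phi> i > 0"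
    and "u \<le> v"
  shows "mixture_pvalue k J w \<phi> v \<le> mixture_pvalue k J w \<phi> u"
  unfolding mixture_pvalue_def using \<open>u \<le> v\<close> w \<phi>
  by (intro divide_right_mono sum_mono mult_right_mono mult_left_mono student_t_cdf_mono k sum_nonneg)
    (auto simp: divide_right_mono less_imp_le)

lemma continuous_on_mixture_pvalue:
  assumes k: "k > 0" and \<phi>: "\<And>i. i \<in> J \<Longrightarrow> \<phi> i > 0"
  shows "continuous_on UNIV (mixture_pvalue k J w \<phi>)"
proof -
  have "continuous_on UNIV
      (\<lambda>u. (\<Sum>i\<in>J. 2 * student_t_cdf k (- u / \<phi> i) * w i) * inverse (\<Sum>i\<in>J. w i))"
    by (intro continuous_intros continuous_on_compose2[OF continuous_on_student_t_cdf[OF k]])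
      (auto dest: \<phi>)
  then show ?thesis
    unfolding mixture_pvalue_def divide_inverse .
qed

lemma continuous_antimono_sublevel_threshold:
  fixes G :: "real \<Rightarrow> real"
  assumes "continuous_on UNIV G" and antimono: "\<And>u v. u \<le> v \<Longrightarrow> G v \<le> G u"
    and "u\<^sub>0 \<ge> 0" "G u\<^sub>0 \<le> \<alpha>"
  obtains c where "c \<ge> 0" "\<And>u. u \<ge> 0 \<Longrightarrow> G u \<le> \<alpha> \<longleftrightarrow> c \<le> u"
proof -
  define A where "A = {u. 0 \<le> u \<and> G u \<le> \<alpha>}"
  have "A \<noteq> {}"
    using assms(3,4) by (auto simp: A_def)
  moreover have "bdd_below A"
    unfolding A_def by (auto intro: bdd_belowI[of _ 0])
  moreover have "closed A"
    unfolding A_def Collect_conj_eq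
    by (intro closed_Int closed_Collect_le assms(1) continuous_on_const continuous_on_id)
  ultimately have "Inf A \<in> A"
    by (rule closed_contains_Inf)
  moreover have "G u \<le> \<alpha> \<longleftrightarrow> Inf A \<le> u" if "u \<ge> 0" for u
  proof
    assume "G u \<le> \<alpha>"
    with \<open>u \<ge> 0\<close> \<open>bdd_below A\<close> show "Inf A \<le> u"
      by (intro cInf_lower) (auto simp: A_def)
  next
    assume "Inf A \<le> u"
    then have "G u \<le> G (Inf A)"
      by (rule antimono)
    also have "G (Inf A) \<le> \<alpha>"
      using \<open>Inf A \<in> A\<close> by (simp add: A_def)
    finally show "G u \<le> \<alpha>" .
  qed
  moreover have "Inf A \<ge> 0"
    using \<open>Inf A \<in> A\<close> by (simp add: A_def)
  ultimately show ?thesis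
    using that by blast
qed

lemma sum_rejection_prob_eq_mixture_pvalue:
  fixes w \<phi> :: "nat \<Rightarrow> real"
  assumes k: "k > 0" and w: "\<And>j. j \<in> J \<Longrightarrow> w j \<ge> 0" and \<phi>: "\<And>j. j \<in> J \<Longrightarrow> \<phi> j > 0"
    and S: "(\<Sum>j\<in>J. w j) > 0" and "c \<ge> 0"
    and threshold: "\<And>u. u \<ge> 0 \<Longrightarrow> mixture_pvalue k J w \<phi> u \<le> \<alpha> \<longleftrightarrow> c \<le> u"
  shows "(\<Sum>j\<in>J. ennreal (w j) * (\<integral>\<^sup>+x. ennreal (student_t_density k x
      * indicator {x. mixture_pvalue k J w \<phi> \<bar>\<phi> j * x\<bar> \<le> \<alpha>} x) \<partial>lborel))
    = ennreal ((\<Sum>j\<in>J. w j) * mixture_pvalue k J w \<phi> c)"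
proof -
  have "(\<integral>\<^sup>+x. ennreal (student_t_density k x
      * indicator {x. mixture_pvalue k J w \<phi> \<bar>\<phi> j * x\<bar> \<le> \<alpha>} x) \<partial>lborel)
    = ennreal (2 * student_t_cdf k (- (c / \<phi> j)))" if "j \<in> J" for j
  proof -
    have "{x. mixture_pvalue k J w \<phi> \<bar>\<phi> j * x\<bar> \<le> \<alpha>} = {x. c / \<phi> j \<le> \<bar>x\<bar>}"
      using threshold \<phi>[OF that] by (auto simp: abs_mult divide_le_eq mult.commute)
    then show ?thesis
      using nn_integral_student_t_density_abs_ge[OF k, of "c / \<phi> j"] \<open>c \<ge> 0\<close> \<phi>[OF that] by simp
  qed
  then have "(\<Sum>j\<in>J. ennreal (w j) * (\<integral>\<^sup>+x. ennreal (student_t_density k x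
      * indicator {x. mixture_pvalue k J w \<phi> \<bar>\<phi> j * x\<bar> \<le> \<alpha>} x) \<partial>lborel))
    = (\<Sum>j\<in>J. ennreal (w j * (2 * student_t_cdf k (- (c / \<phi> j)))))"
    using w by (intro sum.cong) (simp_all add: ennreal_mult')
  also have "\<dots> = ennreal ((\<Sum>j\<in>J. w j) * mixture_pvalue k J w \<phi> c)"
    using w S by (subst sum_ennreal)
      (auto intro!: mult_nonneg_nonneg student_t_cdf_nonneg
        simp: mixture_pvalue_def sum_divide_distrib[symmetric] mult_ac)
  finally show ?thesis .
qed

text \<open>The rejection region of the mixture p-value is \<open>{\<bar>t\<bar> \<ge> c}\<close> for a threshold \<open>c\<close>.\<close>

lemma mixture_pvalue_level:
  fixes w \<phi> :: "nat \<Rightarrow> real"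
  assumes k: "k > 0" and J: "finite J" and w: "\<And>j. j \<in> J \<Longrightarrow> w j \<ge> 0"
    and \<phi>: "\<And>j. j \<in> J \<Longrightarrow> \<phi> j > 0" and "\<alpha> \<ge> 0"
  shows "(\<Sum>j\<in>J. ennreal (w j) * (\<integral>\<^sup>+x. ennreal (student_t_density k x
      * indicator {x. mixture_pvalue k J w \<phi> \<bar>\<phi> j * x\<bar> \<le> \<alpha>} x) \<partial>lborel))
    \<le> ennreal (\<alpha> * (\<Sum>j\<in>J. w j))"
proof -
  define G where "G = mixture_pvalue k J w \<phi>"
  define S where "S = (\<Sum>j\<in>J. w j)"
  have "S \<ge> 0"
    unfolding S_def using w by (simp add: sum_nonneg)
  consider "S = 0" | "\<forall>u\<ge>0. \<not> G u \<le> \<alpha>" | "S > 0" "\<exists>u\<ge>0. G u \<le> \<alpha>"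
    using \<open>S \<ge> 0\<close> by fastforce
  then show ?thesis
  proof cases
    case 1
    then have "\<forall>j\<in>J. w j = 0"
      using sum_nonneg_eq_0_iff[OF J] w unfolding S_def by blast
    then show ?thesis
      by simp
  next
    case 2
    then show ?thesis
      by (simp add: G_def indicator_def)
  next
    case 3
    then obtain u\<^sub>0 where "u\<^sub>0 \<ge> 0" "G u\<^sub>0 \<le> \<alpha>"
      by blast
    moreover have "continuous_on UNIV G"
      unfolding G_def using k \<phi> by (rule continuous_on_mixture_pvalue)
    moreover have "G v \<le> G u" if "u \<le> v" for u v
      unfolding G_def using k w \<phi> that by (rule mixture_pvalue_antimono)
    ultimately obtain c where "c \<ge> 0" and threshold: "\<And>u. u \<ge> 0 \<Longrightarrow> G u \<le> \<alpha> \<longleftrightarrow> c \<le> u"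
      using continuous_antimono_sublevel_threshold by metis
    have "(\<Sum>j\<in>J. ennreal (w j) * (\<integral>\<^sup>+x. ennreal (student_t_density k x
        * indicator {x. mixture_pvalue k J w \<phi> \<bar>\<phi> j * x\<bar> \<le> \<alpha>} x) \<partial>lborel))
      = ennreal (S * G c)"
      unfolding S_def G_def using k w \<phi> 3(1)[unfolded S_def] \<open>c \<ge> 0\<close> threshold[unfolded G_def]
      by (rule sum_rejection_prob_eq_mixture_pvalue)
    also have "\<dots> \<le> ennreal (\<alpha> * S)"
      using threshold[OF \<open>c \<ge> 0\<close>] \<open>S > 0\<close> by (intro ennreal_leI) (simp add: mult.commute)
    finally show ?thesis
      unfolding S_def .
  qed
qed

lemma borel_measurable_P_VR_G [measurable]:
  assumes [measurable]: "g \<in> borel_measurable M" "h \<in> borel_measurable M"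
  shows "(\<lambda>x. P_VR_G KA KB n lam (g x) (h x)) \<in> borel_measurable M"
  unfolding P_VR_G_def P_VR_def by measurable

lemma phi_VR_pos:
  assumes KA: "KA \<ge> 2" and KB: "KB \<ge> 2" and lam: "lam > 0" and l: "l > 0"
  shows "phi_VR KA KB lam l > 0"
proof -
  define q where "q = real KA / real KB"
  define c where "c = l / (l + q)"
  define g where "g = lam / (lam + q)"
  have q: "q > 0"
    using KA KB by (simp add: q_def)
  have "0 < c" "c < 1" "0 < g" "g < 1"
    using l lam q by (simp_all add: c_def g_def)
  moreover have "real (KA - 1) > 0" "real (KB - 1) > 0"
    using KA KB by auto
  ultimately have "real (KA - 1) * c / g + real (KB - 1) * (1 - c) / (1 - g) > 0"
    by (intro add_pos_pos divide_pos_pos mult_pos_pos) auto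
  then show ?thesis
    unfolding phi_VR_def Let_def q_def[symmetric] c_def[symmetric] g_def[symmetric]
    using KA KB by simp
qed

lemma P_VR_G_eq_mixture_pvalue:
  "P_VR_G KA KB n lam t l = mixture_pvalue (KA - 1 + (KB - 1)) {1..n}
     (\<lambda>j. p_ratio KA KB l (lam j)) (\<lambda>j. phi_VR KA KB (lam j) l) \<bar>t\<bar>"
  unfolding P_VR_G_def P_VR_def mixture_pvalue_def by (simp add: mult_ac)

lemma sum_p_ratio_rejection_le:
  assumes KA: "KA \<ge> 2" and KB: "KB \<ge> 2" and lam: "\<And>i. i \<in> {1..n} \<Longrightarrow> lam i > 0"
    and "\<alpha> \<ge> 0"
  defines "R \<equiv> {(t, l). P_VR_G KA KB n lam t l \<le> \<alpha>}"
  shows "(\<Sum>i\<in>{1..n}. ennreal (p_ratio KA KB l (lam i)) *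
      (\<integral>\<^sup>+x. ennreal (student_t_density (KA - 1 + (KB - 1)) x)
        * indicator R (phi_VR KA KB (lam i) l * x, l) \<partial>lborel))
    \<le> ennreal (\<alpha> * (\<Sum>i\<in>{1..n}. p_ratio KA KB l (lam i)))"
proof (cases "l > 0")
  case False
  then show ?thesis
    by (simp add: p_ratio_def)
next
  case True
  define \<nu> where "\<nu> = KA - 1 + (KB - 1)"
  define G where
    "G = mixture_pvalue \<nu> {1..n} (\<lambda>j. p_ratio KA KB l (lam j)) (\<lambda>j. phi_VR KA KB (lam j) l)"
  have "ennreal (student_t_density \<nu> x) * indicator R (phi_VR KA KB (lam i) l * x, l)
      = ennreal (student_t_density \<nu> x * indicator {x. G \<bar>phi_VR KA KB (lam i) l * x\<bar> \<le> \<alpha>} x)" for i x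
    by (simp add: R_def G_def \<nu>_def P_VR_G_eq_mixture_pvalue indicator_def)
  moreover have "(\<Sum>i\<in>{1..n}. ennreal (p_ratio KA KB l (lam i)) * (\<integral>\<^sup>+x. ennreal (student_t_density \<nu> x
      * indicator {x. G \<bar>phi_VR KA KB (lam i) l * x\<bar> \<le> \<alpha>} x) \<partial>lborel))
    \<le> ennreal (\<alpha> * (\<Sum>i\<in>{1..n}. p_ratio KA KB l (lam i)))"
    unfolding G_def using KA KB lam True \<open>\<alpha> \<ge> 0\<close>
    by (intro mixture_pvalue_level p_ratio_nonneg phi_VR_pos) (auto simp: \<nu>_def)
  ultimately show ?thesis
    unfolding \<nu>_def by simp
qed

lemma sum_emeasure_null_rejection_le:
  assumes KA: "KA \<ge> 2" and KB: "KB \<ge> 2"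
    and sA: "\<And>i. i \<in> {1..n} \<Longrightarrow> sA i > 0" and sB: "\<And>i. i \<in> {1..n} \<Longrightarrow> sB i > 0"
    and \<alpha>: "\<alpha> \<ge> 0"
  defines "lam \<equiv> \<lambda>j. sA j / sB j"
  shows "(\<Sum>i\<in>{1..n}. emeasure (unit_law KA KB (mu i) (sA i) (mu i) (sB i))
      {w. P_VR_G KA KB n lam (T_BF KA KB w) (lam_hat w) \<le> \<alpha>}) \<le> ennreal (\<alpha> * real n)"
proof -
  define R where "R = {(t, l). P_VR_G KA KB n lam t l \<le> \<alpha>}"
  define K where "K i l = (\<integral>\<^sup>+x. ennreal (student_t_density (KA - 1 + (KB - 1)) x)
    * indicator R (phi_VR KA KB (lam i) l * x, l) \<partial>lborel)" for i l
  have lam: "lam i > 0" if "i \<in> {1..n}" for i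
    using sA[OF that] sB[OF that] by (simp add: lam_def)
  have "{p \<in> space (borel \<Otimes>\<^sub>M borel). P_VR_G KA KB n lam (fst p) (snd p) \<le> \<alpha>}
      \<in> sets (borel \<Otimes>\<^sub>M borel)"
    by measurable
  then have [measurable]: "R \<in> sets (borel \<Otimes>\<^sub>M borel)"
    by (simp add: R_def space_pair_measure case_prod_beta')
  have "emeasure (unit_law KA KB (mu i) (sA i) (mu i) (sB i))
      {w. P_VR_G KA KB n lam (T_BF KA KB w) (lam_hat w) \<le> \<alpha>}
    = (\<integral>\<^sup>+l. ennreal (p_ratio KA KB l (lam i)) * K i l \<partial>lborel)" if "i \<in> {1..n}" for i
    using emeasure_unit_law_null[OF KA KB sA[OF that] sB[OF that] \<open>R \<in> sets _\<close>]
    by (simp add: R_def K_def lam_def)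
  then have "(\<Sum>i\<in>{1..n}. emeasure (unit_law KA KB (mu i) (sA i) (mu i) (sB i))
      {w. P_VR_G KA KB n lam (T_BF KA KB w) (lam_hat w) \<le> \<alpha>})
    = (\<integral>\<^sup>+l. (\<Sum>i\<in>{1..n}. ennreal (p_ratio KA KB l (lam i)) * K i l) \<partial>lborel)"
    by (simp add: K_def nn_integral_sum)
  also have "\<dots> \<le> (\<integral>\<^sup>+l. ennreal (\<alpha> * (\<Sum>i\<in>{1..n}. p_ratio KA KB l (lam i))) \<partial>lborel)"
    unfolding K_def R_def using KA KB lam \<alpha> by (intro nn_integral_mono sum_p_ratio_rejection_le) auto
  also have "\<dots> = (\<integral>\<^sup>+l. ennreal \<alpha> * (\<Sum>i\<in>{1..n}. ennreal (p_ratio KA KB l (lam i))) \<partial>lborel)"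
  proof (rule nn_integral_cong)
    fix l :: real
    have nonneg: "p_ratio KA KB l (lam i) \<ge> 0" if "i \<in> {1..n}" for i
      using KA KB lam[OF that] by (rule p_ratio_nonneg)
    then have "(\<Sum>i\<in>{1..n}. ennreal (p_ratio KA KB l (lam i)))
        = ennreal (\<Sum>i\<in>{1..n}. p_ratio KA KB l (lam i))"
      by (rule sum_ennreal)
    moreover have "(\<Sum>i\<in>{1..n}. p_ratio KA KB l (lam i)) \<ge> 0"
      using nonneg by (rule sum_nonneg)
    ultimately show "ennreal (\<alpha> * (\<Sum>i\<in>{1..n}. p_ratio KA KB l (lam i)))
        = ennreal \<alpha> * (\<Sum>i\<in>{1..n}. ennreal (p_ratio KA KB l (lam i)))"
      using \<alpha> by (simp add: ennreal_mult)
  qed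
  also have "\<dots> = ennreal (\<alpha> * real n)"
    using KA KB lam \<alpha>
    by (simp add: nn_integral_cmult nn_integral_sum nn_integral_p_ratio ennreal_mult
        ennreal_of_nat_eq_real_of_nat)
  finally show ?thesis .
qed

lemma sum_null_rejection_prob_le:
  assumes KA: "KA \<ge> 2" and KB: "KB \<ge> 2"
    and sA: "\<And>i. i \<in> {1..n} \<Longrightarrow> sA i > 0" and sB: "\<And>i. i \<in> {1..n} \<Longrightarrow> sB i > 0"
    and \<alpha>: "\<alpha> \<ge> 0"
  shows "(\<Sum>i\<in>{1..n}. measure (unit_law KA KB (mu i) (sA i) (mu i) (sB i))
      {w. P_VR_G KA KB n (\<lambda>j. sA j / sB j) (T_BF KA KB w) (lam_hat w) \<le> \<alpha>}) \<le> \<alpha> * real n"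
proof -
  define E where "E = {w. P_VR_G KA KB n (\<lambda>j. sA j / sB j) (T_BF KA KB w) (lam_hat w) \<le> \<alpha>}"
  define M where "M i = unit_law KA KB (mu i) (sA i) (mu i) (sB i)" for i
  have "emeasure (M i) E < \<top>" if "i \<in> {1..n}" for i
  proof -
    interpret prob_space "M i"
      unfolding M_def using KA KB sA[OF that] sB[OF that] by (rule prob_space_unit_law)
    show ?thesis
      by (simp add: less_top[symmetric])
  qed
  then have "(\<Sum>i\<in>{1..n}. measure (M i) E) = enn2real (\<Sum>i\<in>{1..n}. emeasure (M i) E)"
    unfolding measure_def using enn2real_sum[of "{1..n}" "\<lambda>i. emeasure (M i) E"] by simp
  also have "\<dots> \<le> \<alpha> * real n"
    using sum_emeasure_null_rejection_le[OF KA KB sA sB \<alpha>] \<alpha>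
    unfolding M_def E_def by (intro enn2real_leI) auto
  finally show ?thesis
    unfolding M_def E_def .
qed

theorem propositionS5:
  fixes KA KB n :: nat and muA muB sA sB :: "nat \<Rightarrow> real" and \<alpha> :: real
  assumes "KA \<ge> 2" and "KB \<ge> 2"
    and "\<And>i. i \<in> {1..n} \<Longrightarrow> sA i > 0"
    and "\<And>i. i \<in> {1..n} \<Longrightarrow> sB i > 0"
    and "0 \<le> \<alpha>" and "\<alpha> \<le> 1"
  shows "(1 / real n) * (\<Sum>i\<in>{i\<in>{1..n}. muA i = muB i}.
            measure (unit_law KA KB (muA i) (sA i) (muB i) (sB i))
              {w. P_VR_G KA KB n (\<lambda>j. sA j / sB j) (T_BF KA KB w) (lam_hat w) \<le> \<alpha>}) \<le> \<alpha>"
proof -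
  define E where "E = {w. P_VR_G KA KB n (\<lambda>j. sA j / sB j) (T_BF KA KB w) (lam_hat w) \<le> \<alpha>}"
  define H0 where "H0 = {i\<in>{1..n}. muA i = muB i}"
  have "(\<Sum>i\<in>H0. measure (unit_law KA KB (muA i) (sA i) (muB i) (sB i)) E)
      = (\<Sum>i\<in>H0. measure (unit_law KA KB (muA i) (sA i) (muA i) (sB i)) E)"
    by (intro sum.cong) (auto simp: H0_def)
  also have "\<dots> \<le> (\<Sum>i\<in>{1..n}. measure (unit_law KA KB (muA i) (sA i) (muA i) (sB i)) E)"
    by (intro sum_mono2) (auto simp: H0_def)
  also have "\<dots> \<le> \<alpha> * real n"
    unfolding E_def using assms by (intro sum_null_rejection_prob_le) auto
  finally show ?thesis
    unfolding H0_def[symmetric] E_def[symmetric]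
    by (cases "n = 0") (simp_all add: assms(5) field_simps)
qed

end
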